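(* There exists a compact set $\mathbb K\subset\mathbb R^2$ which is a non-sticky Kakeya set and has two-dimensional Lebesgue measure zero. Consequently, for every $d>2$ there exists a non-sticky Kakeya set in $\mathbb R^d$ of $d$-dimensional Lebesgue measure zero.
   Context: A Kakeya set in $\mathbb R^d$ is a compact set containing a unit line segment in every direction. For $\mathbf v,\mathbf a\in\mathbb R^{d-1}$ let $L_{\mathbf v,\mathbf a}=\{(\mathbf a,0)+t(\mathbf v,1):t\in\mathbb R\}$; every line not contained in the hyperplane $\{x_d=0\}$ is of this form. The set of such lines is identified with $\mathbb R^{2d-2}$ via $(\mathbf v,\mathbf a)$, with metric $\|\mathbf a-\mathbf b\|+\|\mathbf v-\mathbf w\|$. For a Kakeya set $\mathbb K\subset\mathbb R^d$ let $\mathcal A_{\mathbb K}=\{(\mathbf v,\mathbf a)\in\mathbb R^{2d-2}: L_{\mathbf v,\mathbf a}\cap\mathbb K\text{ contains a unit line segment}\}$. The Kakeya set $\mathbb K$ is called sticky if the packing dimension of $\mathcal A_{\mathbb K}$ equals $d-1$, and non-sticky otherwise (i.e. if the packing dimension of $\mathcal A_{\mathbb K}$ is strictly larger than $d-1$). *)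

theory Defs
  imports "HOL-Analysis.Analysis"
begin

text \<open>Euclidean space R^d is represented as the product type real^'m \<times> real with
  CARD('m) = d - 1; the second (real) component is the last coordinate x_d.
  Norms/distances on this product type are the Euclidean ones.\<close>

definition kakeya_set :: "((real^'m::finite) \<times> real) set \<Rightarrow> bool" where
  "kakeya_set K \<longleftrightarrow> compact K \<and>
     (\<forall>u::(real^'m) \<times> real. norm u = 1 \<longrightarrow> (\<exists>x. closed_segment x (x + u) \<subseteq> K))"

definition kline :: "(real^'m::finite) \<Rightarrow> (real^'m) \<Rightarrow> ((real^'m::finite) \<times> real) set" where
  "kline v a = {(a + t *\<^sub>R v, t) | t. True}"

definition line_set :: "((real^'m::finite) \<times> real) set \<Rightarrow> ((real^'m::finite) \<times> (real^'m)) set" where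
  "line_set K = {(v, a). \<exists>p q. dist p q = 1 \<and> closed_segment p q \<subseteq> kline v a \<inter> K}"

definition line_dist :: "((real^'m::finite) \<times> (real^'m)) \<Rightarrow> ((real^'m::finite) \<times> (real^'m)) \<Rightarrow> real" where
  "line_dist = (\<lambda>(v, a) (w, b). norm (a - b) + norm (v - w))"

text \<open>Packing premeasure: P^s_0(E) = lim_{delta -> 0} sup sum (2 r_i)^s over disjoint families
  of closed balls B(x_i,r_i) with x_i in E and 0 < r_i <= delta (finite subfamilies suffice
  for the supremum of nonnegative sums).\<close>
definition mball :: "('a \<Rightarrow> 'a \<Rightarrow> real) \<Rightarrow> 'a \<Rightarrow> real \<Rightarrow> 'a set" where
  "mball d x r = {y. d x y \<le> r}"

definition packing_premeasure :: "('a \<Rightarrow> 'a \<Rightarrow> real) \<Rightarrow> real \<Rightarrow> 'a set \<Rightarrow> ennreal" where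
  "packing_premeasure d s E =
     (INF \<delta>\<in>{0<..}. SUP P\<in>{P. finite P \<and> (\<forall>(x, r)\<in>P. x \<in> E \<and> 0 < r \<and> r \<le> \<delta>) \<and>
              (\<forall>(x, r)\<in>P. \<forall>(y, t)\<in>P. (x, r) \<noteq> (y, t) \<longrightarrow> mball d x r \<inter> mball d y t = {})}.
        (\<Sum>(x, r)\<in>P. ennreal ((2 * r) powr s)))"

definition packing_measure :: "('a \<Rightarrow> 'a \<Rightarrow> real) \<Rightarrow> real \<Rightarrow> 'a set \<Rightarrow> ennreal" where
  "packing_measure d s E =
     (INF F\<in>{F :: nat \<Rightarrow> 'a set. E \<subseteq> (\<Union>i. F i)}. (\<Sum>i. packing_premeasure d s (F i)))"

definition packing_dim :: "('a \<Rightarrow> 'a \<Rightarrow> real) \<Rightarrow> 'a set \<Rightarrow> ereal" where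
  "packing_dim d E = Sup {ereal s | s. 0 \<le> s \<and> packing_measure d s E = \<infinity>}"

definition non_sticky :: "((real^'m::finite) \<times> real) set \<Rightarrow> bool" where
  "non_sticky K \<longleftrightarrow> packing_dim line_dist (line_set K) > ereal (real CARD('m))"

end

(*
  The Kakeya set is the union of two compact pieces.

  The first is a planar Besicovitch set, the closure of a fan of segments
  {(a v + t v, t) : |v| <= 1, 0 <= t <= 1} of measure zero. Following Koerner, a is found by a
  Baire category argument as a uniform limit of piecewise affine functions whose segments are
  focused through common points at more and more heights. Together with its reflection the fan
  contains a translate of every planar segment of length at most one, so thickening it by
  [-1, 1] in the remaining coordinates gives a null set containing a unit segment in every
  direction of R^d.

  The second piece is the union of the segments {(a + t v, t) : 0 <= t <= 1} with a, v in C^(d-1),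
  where C is a Cantor set whose binary digits are free only at the levels in (36^k, 6 * 36^k].
  At scale 2^(-36^(k+1)), C is covered by only 2^(6 * 36^k) dyadic intervals, so the planar sets
  {(a + t v, t)} with a, v in C are null, and hence so is the second piece. Between the scales
  2^(-36^k) and 2^(-6 * 36^k), however, C looks like an interval: near each of its points
  C^(2(d-1)) contains 2^(10 (d-1) 36^k) points that are 2^(-6 * 36^k)-separated. So every set
  dense in a relatively open part of C^(2(d-1)) has infinite packing premeasure in dimension
  d - 1/2, and by the Baire category theorem the packing measure of A_K, which contains
  C^(2(d-1)), is infinite in that dimension.
*)

theory Submission
  imports Defs
begin

section \<open>A Cantor set with sparse free digits\<close>

text \<open>At a free level both binary digits are allowed, otherwise only the digit 0. Up to level
  \<open>36^(k+1)\<close> at most \<open>6 * 36^k\<close> levels are free, which makes the set very thin at those scales;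
  but the \<open>5 * 36^k\<close> consecutive levels after \<open>36^k\<close> are all free, where the set looks like an
  interval.\<close>

definition free_levels :: "nat set" where
  "free_levels = {l. \<exists>k. 36^k < l \<and> l \<le> 6 * 36^k}"

fun cantor_pts :: "nat \<Rightarrow> real set" where
  "cantor_pts 0 = {0}"
| "cantor_pts (Suc n) =
     (if Suc n \<in> free_levels then cantor_pts n \<union> (\<lambda>p. p + (1/2)^Suc n) ` cantor_pts n
      else cantor_pts n)"

definition cantor_approx :: "nat \<Rightarrow> real set" where
  "cantor_approx n = (\<Union>p\<in>cantor_pts n. {p..p + (1/2)^n})"

definition sparse_cantor :: "real set" where
  "sparse_cantor = (\<Inter>n. cantor_approx n)"

lemma finite_cantor_pts: "finite (cantor_pts n)"
  by (induction n) auto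

lemma cantor_pts_bounds: "p \<in> cantor_pts n \<Longrightarrow> 0 \<le> p \<and> p + (1/2)^n \<le> 1"
proof (induction n arbitrary: p)
  case (Suc n)
  have half: "(1/2::real)^Suc n = (1/2)^n / 2" by simp
  from Suc.prems consider "p \<in> cantor_pts n" | q where "q \<in> cantor_pts n" "p = q + (1/2)^Suc n"
    by (auto split: if_splits)
  then show ?case
  proof cases
    case 1
    then show ?thesis using Suc.IH[of p] half zero_le_power[of "1/2::real" n] by linarith
  next
    case 2
    then show ?thesis using Suc.IH[of q] half by simp
  qed
qed simp

lemma cantor_pts_Suc: "cantor_pts n \<subseteq> cantor_pts (Suc n)"
  by auto

lemma cantor_pts_mono: "m \<le> n \<Longrightarrow> cantor_pts m \<subseteq> cantor_pts n"
  by (induction n rule: dec_induct) (use cantor_pts_Suc in blast)+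

lemma cantor_approx_Suc: "cantor_approx (Suc n) \<subseteq> cantor_approx n"
proof
  fix x assume "x \<in> cantor_approx (Suc n)"
  then obtain p where p: "p \<in> cantor_pts (Suc n)" "p \<le> x" "x \<le> p + (1/2)^Suc n"
    by (auto simp: cantor_approx_def)
  from p(1) consider "p \<in> cantor_pts n" | q where "q \<in> cantor_pts n" "p = q + (1/2)^Suc n"
    by (auto split: if_splits)
  then show "x \<in> cantor_approx n"
  proof cases
    case 1
    then show ?thesis using p unfolding cantor_approx_def by (auto intro!: bexI[of _ p])
  next
    case 2
    then show ?thesis using p unfolding cantor_approx_def by (auto intro!: bexI[of _ q])
  qed
qed

lemma cantor_approx_antimono: "m \<le> n \<Longrightarrow> cantor_approx n \<subseteq> cantor_approx m"
  by (induction n rule: dec_induct) (use cantor_approx_Suc in blast)+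

lemma cantor_pts_subset: "cantor_pts n \<subseteq> sparse_cantor"
proof
  fix p assume p: "p \<in> cantor_pts n"
  have "p \<in> cantor_approx m" for m
  proof (cases "n \<le> m")
    case True
    then have "p \<in> cantor_pts m" using cantor_pts_mono p by blast
    then show ?thesis unfolding cantor_approx_def by auto
  next
    case False
    have "p \<in> cantor_approx n" using p unfolding cantor_approx_def by auto
    then show ?thesis using cantor_approx_antimono[of m n] False by auto
  qed
  then show "p \<in> sparse_cantor" by (auto simp: sparse_cantor_def)
qed

lemma sparse_cantor_approx:
  "x \<in> sparse_cantor \<Longrightarrow> \<exists>p\<in>cantor_pts n. p \<le> x \<and> x \<le> p + (1/2)^n"
  by (auto simp: sparse_cantor_def cantor_approx_def)

lemma sparse_cantor_subset: "sparse_cantor \<subseteq> {0..1}"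
proof
  fix x assume "x \<in> sparse_cantor"
  then show "x \<in> {0..1}" using sparse_cantor_approx[of x 0] by auto
qed

lemma zero_in_sparse_cantor: "0 \<in> sparse_cantor"
  using cantor_pts_subset[of 0] by simp

lemma compact_sparse_cantor: "compact sparse_cantor"
proof -
  have "closed (cantor_approx n)" for n
    unfolding cantor_approx_def using finite_cantor_pts by (intro closed_UN) auto
  then have "closed sparse_cantor" unfolding sparse_cantor_def by auto
  moreover have "bounded sparse_cantor"
    using sparse_cantor_subset by (rule bounded_subset[rotated]) simp
  ultimately show ?thesis by (simp add: compact_eq_bounded_closed)
qed

lemma cantor_pts_full_block:
  assumes free: "\<And>l. n < l \<Longrightarrow> l \<le> n + d \<Longrightarrow> l \<in> free_levels"
    and p: "p \<in> cantor_pts n" and j: "j < 2^d"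
  shows "p + real j * (1/2)^(n + d) \<in> cantor_pts (n + d)"
  using free j
proof (induction d arbitrary: j)
  case (Suc d)
  have free_Suc: "Suc (n + d) \<in> free_levels" using Suc.prems(1)[of "Suc (n + d)"] by simp
  have "j div 2 < 2^d" using Suc.prems(2) by (simp add: less_mult_imp_div_less)
  then have coarse: "p + real (j div 2) * (1/2)^(n + d) \<in> cantor_pts (n + d)"
    using Suc.IH Suc.prems(1) by force
  have "real j = 2 * real (j div 2) + real (j mod 2)"
    by (metis of_nat_add of_nat_mult div_mult_mod_eq mult.commute of_nat_numeral)
  then have split: "p + real j * (1/2)^(n + Suc d)
      = p + real (j div 2) * (1/2)^(n + d) + real (j mod 2) * (1/2)^Suc (n + d)"
    by (simp add: algebra_simps)
  have cantor_pts_Suc_free: "cantor_pts (n + Suc d)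
      = cantor_pts (n + d) \<union> (\<lambda>q. q + (1/2)^Suc (n + d)) ` cantor_pts (n + d)"
    using free_Suc by simp
  show ?case
  proof (cases "j mod 2 = 0")
    case True
    then show ?thesis using coarse split unfolding cantor_pts_Suc_free by simp
  next
    case False
    then have "p + real j * (1/2)^(n + Suc d)
        = (\<lambda>q. q + (1/2)^Suc (n + d)) (p + real (j div 2) * (1/2)^(n + d))"
      using split by simp
    then show ?thesis using coarse unfolding cantor_pts_Suc_free by blast
  qed
qed (use p in simp)

fun free_count :: "nat \<Rightarrow> nat" where
  "free_count 0 = 0"
| "free_count (Suc n) = free_count n + (if Suc n \<in> free_levels then 1 else 0)"

lemma card_cantor_pts: "card (cantor_pts n) \<le> 2 ^ free_count n"
proof (induction n)
  case (Suc n)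
  show ?case
  proof (cases "Suc n \<in> free_levels")
    case True
    have "card (cantor_pts (Suc n))
        \<le> card (cantor_pts n) + card ((\<lambda>p. p + (1/2)^Suc n) ` cantor_pts n)"
      using True by (simp add: card_Un_le)
    also have "\<dots> \<le> 2 * card (cantor_pts n)" using card_image_le[OF finite_cantor_pts] by simp
    finally show ?thesis using Suc True by simp
  qed (use Suc in simp)
qed simp

lemma free_count_le: "free_count n \<le> n"
  by (induction n) auto

lemma free_count_const:
  "m \<le> n \<Longrightarrow> (\<And>l. m < l \<Longrightarrow> l \<le> n \<Longrightarrow> l \<notin> free_levels) \<Longrightarrow> free_count n = free_count m"
  by (induction n rule: dec_induct) auto

lemma free_count_sparse: "free_count (36^Suc k) \<le> 6 * 36^k"
proof -
  have "free_count (36^Suc k) = free_count (6 * 36^k)"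
  proof (rule free_count_const)
    fix l :: nat assume l: "6 * 36^k < l" "l \<le> 36^Suc k"
    show "l \<notin> free_levels"
    proof
      assume "l \<in> free_levels"
      then obtain j where j: "36^j < l" "l \<le> 6 * 36^j" by (auto simp: free_levels_def)
      show False
      proof (cases "j \<le> k")
        case True
        then have "(36::nat)^j \<le> 36^k" by (simp add: power_increasing)
        then show False using j l by linarith
      next
        case False
        then have "(36::nat)^Suc k \<le> 36^j" by (intro power_increasing) auto
        then show False using j l by linarith
      qed
    qed
  qed simp
  then show ?thesis using free_count_le[of "6 * 36^k"] by simp
qed

lemma card_cantor_pts_sparse: "card (cantor_pts (36^Suc k)) \<le> 2 ^ (6 * 36^k)"
proof -
  have "(2::nat) ^ free_count (36^Suc k) \<le> 2 ^ (6 * 36^k)"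
    using free_count_sparse[of k] by (intro power_increasing) auto
  then show ?thesis using card_cantor_pts[of "36^Suc k"] by linarith
qed

lemma sparse_cantor_block:
  assumes "p \<in> cantor_pts (36^k)" "j < 2^(5 * 36^k)"
  shows "p + real j * (1/2)^(6 * 36^k) \<in> sparse_cantor"
proof -
  have "p + real j * (1/2)^(36^k + 5 * 36^k) \<in> cantor_pts (36^k + 5 * 36^k)"
  proof (rule cantor_pts_full_block)
    show "l \<in> free_levels" if "36^k < l" "l \<le> 36^k + 5 * 36^k" for l
      unfolding free_levels_def using that by (intro CollectI exI[of _ k]) simp
  qed (use assms in simp_all)
  then show ?thesis using cantor_pts_subset by auto
qed

definition cantor_cube :: "(real^'n::finite) set" where
  "cantor_cube = {v. \<forall>j. v $ j \<in> sparse_cantor}"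

lemma zero_in_cantor_cube: "0 \<in> cantor_cube"
  by (simp add: cantor_cube_def zero_in_sparse_cantor)

lemma cantor_cube_subset: "v \<in> cantor_cube \<Longrightarrow> 0 \<le> v $ j \<and> v $ j \<le> 1"
  using sparse_cantor_subset by (auto simp: cantor_cube_def)

lemma compact_cantor_cube: "compact (cantor_cube :: (real^'n::finite) set)"
proof -
  have "closed (\<Inter>j. (\<lambda>v::real^'n. v $ j) -` sparse_cantor)"
    by (intro closed_INT ballI closed_vimage compact_imp_closed compact_sparse_cantor
        continuous_intros)
  moreover have "(cantor_cube :: (real^'n) set) = (\<Inter>j. (\<lambda>v. v $ j) -` sparse_cantor)"
    by (auto simp: cantor_cube_def)
  moreover have "(cantor_cube :: (real^'n) set) \<subseteq> cbox 0 1"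
    unfolding mem_box_cart(2) subset_iff using cantor_cube_subset by simp blast
  then have "bounded (cantor_cube :: (real^'n) set)" by (rule bounded_subset[rotated]) simp
  ultimately show ?thesis by (simp add: compact_eq_bounded_closed)
qed

section \<open>Finite covers by open rectangles\<close>

definition rect :: "real \<times> real \<times> real \<times> real \<Rightarrow> (real \<times> real) set" where
  "rect r = (case r of (a, b, c, d) \<Rightarrow> {a<..<b} \<times> {c<..<d})"

definition rect_area :: "real \<times> real \<times> real \<times> real \<Rightarrow> real" where
  "rect_area r = (case r of (a, b, c, d) \<Rightarrow> (b - a) * (d - c))"

definition proper_rect :: "real \<times> real \<times> real \<times> real \<Rightarrow> bool" where
  "proper_rect r = (case r of (a, b, c, d) \<Rightarrow> a \<le> b \<and> c \<le> d)"

definition rect_cover :: "(real \<times> real) set \<Rightarrow> real \<Rightarrow> bool" where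
  "rect_cover S e \<longleftrightarrow> (\<exists>F. finite F \<and> (\<forall>r\<in>F. proper_rect r) \<and>
     S \<subseteq> (\<Union>r\<in>F. rect r) \<and> sum rect_area F < e)"

lemma rect_area_nonneg: "proper_rect r \<Longrightarrow> 0 \<le> rect_area r"
  by (cases r) (auto simp: proper_rect_def rect_area_def)

lemma open_rect: "open (rect r)"
  by (cases r) (auto simp: rect_def intro: open_Times)

lemma rect_coverI:
  assumes "finite I" "\<And>i. i \<in> I \<Longrightarrow> proper_rect (R i)" "S \<subseteq> (\<Union>i\<in>I. rect (R i))"
    and "(\<Sum>i\<in>I. rect_area (R i)) < e"
  shows "rect_cover S e"
proof -
  have "sum rect_area (R ` I) \<le> (\<Sum>i\<in>I. rect_area (R i))"
    using sum_image_le[OF assms(1), of rect_area R] assms(2) rect_area_nonneg by simp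
  then show ?thesis unfolding rect_cover_def using assms
    by (intro exI[of _ "R ` I"]) auto
qed

lemma rect_cover_mono: "rect_cover S e \<Longrightarrow> T \<subseteq> S \<Longrightarrow> e \<le> e' \<Longrightarrow> rect_cover T e'"
  unfolding rect_cover_def by (meson dual_order.trans order_less_le_trans)

lemma rect_cover_Un:
  assumes "rect_cover A e1" "rect_cover B e2"
  shows "rect_cover (A \<union> B) (e1 + e2)"
proof -
  obtain F1 where F1: "finite F1" "\<forall>r\<in>F1. proper_rect r" "A \<subseteq> (\<Union>r\<in>F1. rect r)"
    "sum rect_area F1 < e1"
    using assms(1) unfolding rect_cover_def by blast
  obtain F2 where F2: "finite F2" "\<forall>r\<in>F2. proper_rect r" "B \<subseteq> (\<Union>r\<in>F2. rect r)"
    "sum rect_area F2 < e2"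
    using assms(2) unfolding rect_cover_def by blast
  have "0 \<le> sum rect_area (F1 \<inter> F2)"
    using F1(2) by (intro sum_nonneg) (auto intro: rect_area_nonneg)
  then have "sum rect_area (F1 \<union> F2) \<le> sum rect_area F1 + sum rect_area F2"
    using F1(1) F2(1) by (simp add: sum_Un)
  then show ?thesis unfolding rect_cover_def using F1 F2
    by (intro exI[of _ "F1 \<union> F2"]) auto
qed

lemma rect_cover_UN_atMost:
  assumes "\<And>k. k \<le> m \<Longrightarrow> rect_cover (S k) c"
  shows "rect_cover (\<Union>k\<le>m. S k) (real (Suc m) * c)"
  using assms
proof (induction m)
  case (Suc m)
  have "rect_cover ((\<Union>k\<le>m. S k) \<union> S (Suc m)) (real (Suc m) * c + c)"
    using Suc by (intro rect_cover_Un) auto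
  moreover have "(\<Union>k\<le>Suc m. S k) = (\<Union>k\<le>m. S k) \<union> S (Suc m)" by (auto simp: atMost_Suc)
  ultimately show ?case by (simp add: algebra_simps)
qed simp

lemma rect_cover_swap:
  assumes "rect_cover S e"
  shows "rect_cover (prod.swap ` S) e"
proof -
  let ?flip = "\<lambda>(a, b, c, d). (c, d, a, b) :: real \<times> real \<times> real \<times> real"
  obtain F where F: "finite F" "\<forall>r\<in>F. proper_rect r" "S \<subseteq> (\<Union>r\<in>F. rect r)"
    "sum rect_area F < e"
    using assms unfolding rect_cover_def by blast
  have "(\<Sum>r\<in>F. rect_area (?flip r)) = sum rect_area F"
    by (intro sum.cong) (auto simp: rect_area_def)
  moreover have "prod.swap ` S \<subseteq> (\<Union>r\<in>F. rect (?flip r))"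
    using F(3) by (force simp: rect_def)
  ultimately show ?thesis using F
    by (intro rect_coverI[of F ?flip]) (auto simp: proper_rect_def)
qed

lemma floor_grid_cell:
  assumes "0 < h" "a \<le> t"
  obtains i :: nat where "a + real i * h \<le> t" "t < a + (real i + 1) * h"
proof
  let ?i = "nat \<lfloor>(t - a) / h\<rfloor>"
  have "real ?i = of_int \<lfloor>(t - a) / h\<rfloor>" using assms by simp
  then have "real ?i \<le> (t - a) / h" "(t - a) / h < real ?i + 1" by linarith+
  then show "a + real ?i * h \<le> t" "t < a + (real ?i + 1) * h"
    using assms(1) by (simp_all add: pos_le_divide_eq pos_divide_less_eq algebra_simps)
qed

section \<open>The sets swept by lines with Cantor parameters are null\<close>

definition sweep :: "real set \<Rightarrow> (real \<times> real) set" where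
  "sweep C = {(\<alpha> + t * \<beta>, t) | \<alpha> \<beta> t. \<alpha> \<in> C \<and> \<beta> \<in> C \<and> t \<in> {0..1}}"

text \<open>If \<open>C\<close> is covered by intervals \<open>[p, p + h]\<close>, \<open>p \<in> D\<close>, then over each time interval
  \<open>[i h, (i + 1) h]\<close> the lines with parameters in a pair of such intervals stay in a rectangle
  of size \<open>5 h \<times> 3 h\<close>.\<close>

lemma sweep_estimate:
  fixes \<alpha> \<beta> p q s t h :: real
  assumes "p \<le> \<alpha>" "\<alpha> \<le> p + h" "q \<le> \<beta>" "\<beta> \<le> q + h" "q \<in> {0..1}" "t \<in> {0..1}"
    and "s \<le> t" "t \<le> s + h"
  shows "p + s * q \<le> \<alpha> + t * \<beta> \<and> \<alpha> + t * \<beta> \<le> p + s * q + 3 * h"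
proof -
  have "\<alpha> + t * \<beta> - (p + s * q) = (\<alpha> - p) + t * (\<beta> - q) + (t - s) * q"
    by (simp add: algebra_simps)
  moreover have "0 \<le> t * (\<beta> - q)" using assms(3,6) by simp
  moreover have "t * (\<beta> - q) \<le> 1 * h" using assms(3,4,6) by (intro mult_mono) auto
  moreover have "0 \<le> (t - s) * q" using assms(5,7) by simp
  moreover have "(t - s) * q \<le> h * 1" using assms(1,2,5,8) by (intro mult_mono) auto
  ultimately show ?thesis using assms(1,2) by linarith
qed

lemma rect_cover_sweep:
  fixes C D :: "real set"
  assumes D: "finite D" "D \<noteq> {}" "D \<subseteq> {0..1}"
    and C: "\<And>x. x \<in> C \<Longrightarrow> \<exists>p\<in>D. p \<le> x \<and> x \<le> p + (1/2)^N"
  shows "rect_cover (sweep C) (32 * real (card D)^2 / 2^N)"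
proof -
  define h :: real where "h = (1/2)^N"
  have h0: "h > 0" unfolding h_def by simp
  have h2: "h * 2^N = 1" unfolding h_def by (simp add: power_divide)
  define R where "R = (\<lambda>(p, q, i :: nat). let x = p + real i * h * q in
      (x - h, x + 4 * h, real i * h - h, (real i + 1) * h + h))"
  define I where "I = D \<times> D \<times> {..(2::nat)^N}"
  have "sweep C \<subseteq> (\<Union>x\<in>I. rect (R x))"
  proof
    fix z assume "z \<in> sweep C"
    then obtain \<alpha> \<beta> t where z: "z = (\<alpha> + t * \<beta>, t)" "\<alpha> \<in> C" "\<beta> \<in> C" "t \<in> {0..1}"
      unfolding sweep_def by blast
    obtain p where p: "p \<in> D" "p \<le> \<alpha>" "\<alpha> \<le> p + h" using C[OF z(2)] h_def by auto
    obtain q where q: "q \<in> D" "q \<le> \<beta>" "\<beta> \<le> q + h" using C[OF z(3)] h_def by auto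
    have q1: "0 \<le> q" "q \<le> 1" using q(1) D(3) by auto
    obtain i :: nat where i: "real i * h \<le> t" "t < (real i + 1) * h"
      using floor_grid_cell[OF h0, of 0 t] z(4) by auto
    have "real i * h \<le> 1 * h * 2^N" using i(1) z(4) h2 by simp
    then have "i \<le> 2^N" using h0 by (simp del: of_nat_power add: of_nat_power[symmetric])
    define x where "x = p + real i * h * q"
    have "t \<le> real i * h + h" using i(2) by (simp add: algebra_simps)
    then have "x \<le> \<alpha> + t * \<beta>" "\<alpha> + t * \<beta> \<le> x + 3 * h"
      using sweep_estimate[of p \<alpha> h q \<beta> t "real i * h"] p q q1 z(4) i(1) unfolding x_def by auto
    then have "z \<in> rect (R (p, q, i))" using z(1) i h0 unfolding R_def rect_def x_def Let_def by auto
    moreover have "(p, q, i) \<in> I" unfolding I_def using p q \<open>i \<le> 2^N\<close> by simp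
    ultimately show "z \<in> (\<Union>x\<in>I. rect (R x))" by blast
  qed
  moreover have "proper_rect (R x)" for x
    using h0 by (auto simp: R_def proper_rect_def Let_def algebra_simps split: prod.splits)
  moreover have "(\<Sum>x\<in>I. rect_area (R x)) < 32 * real (card D)^2 / 2^N"
  proof -
    have "(\<Sum>x\<in>I. rect_area (R x)) = real (card I) * (15 * h^2)"
      by (simp add: R_def rect_area_def Let_def algebra_simps power2_eq_square split_beta)
    also have "real (card I) = real (card D)^2 * (2^N + 1)"
      unfolding I_def by (simp add: card_cartesian_product power2_eq_square algebra_simps)
    also have "real (card D)^2 * (2^N + 1) * (15 * h^2) < real (card D)^2 * (2 * 2^N) * (16 * h^2)"
    proof -
      have "(1::real) \<le> 2^N" by simp
      then have "(2^N + 1) * 15 < (2 * 2^N) * (16::real)" by (simp add: algebra_simps; linarith)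
      then have "(2^N + 1) * (15 * h^2) < (2 * 2^N) * (16 * h^2)" using h0 by simp
      moreover have "0 < real (card D)^2" using D(1,2) by (simp add: card_gt_0_iff)
      ultimately show ?thesis by (simp add: mult.assoc)
    qed
    also have "real (card D)^2 * (2 * 2^N) * (16 * h^2) = 32 * real (card D)^2 / 2^N"
      using h2 by (simp add: h_def power2_eq_square field_simps)
    finally show ?thesis .
  qed
  moreover have "finite I" unfolding I_def using D(1) by simp
  ultimately show ?thesis by (intro rect_coverI) auto
qed

lemma rect_cover_sweep_sparse_cantor:
  assumes "e > 0"
  shows "rect_cover (sweep sparse_cantor) e"
proof -
  obtain k where k: "(1/2::real)^k < e / 32" using real_arch_pow_inv[of "e / 32" "1/2"] assms by auto
  define N :: nat where "N = 36^Suc k"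
  have "cantor_pts N \<noteq> {}" using cantor_pts_mono[of 0 N] by auto
  moreover have "cantor_pts N \<subseteq> {0..1}"
  proof
    fix p assume "p \<in> cantor_pts N"
    moreover have "(0::real) \<le> (1/2)^N" by simp
    ultimately show "p \<in> {0..1}" unfolding atLeastAtMost_iff using cantor_pts_bounds[of p N] by linarith
  qed
  ultimately have "rect_cover (sweep sparse_cantor) (32 * real (card (cantor_pts N))^2 / 2^N)"
    using finite_cantor_pts sparse_cantor_approx[of _ N] by (intro rect_cover_sweep) auto
  moreover have "32 * real (card (cantor_pts N))^2 / 2^N \<le> 32 * (1/2)^k"
  proof -
    have "real (card (cantor_pts N)) \<le> 2^(6 * 36^k)"
      using card_cantor_pts_sparse[of k] unfolding N_def
      by (metis of_nat_le_iff of_nat_numeral of_nat_power)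
    then have "real (card (cantor_pts N))^2 \<le> (2^(6 * 36^k))^2"
      by (intro power_mono) auto
    also have "\<dots> = 2^(12 * 36^k)" by (simp flip: power_mult)
    finally have card: "real (card (cantor_pts N))^2 \<le> 2^(12 * 36^k)" .
    have N: "(2::real)^N = 2^(12 * 36^k) * 2^(24 * 36^k)"
      unfolding N_def by (simp flip: power_add)
    have "k \<le> 24 * 36^k"
      using less_exp[of k] power_mono[of "2::nat" 36 k] by linarith
    then have "(2::real)^k \<le> 2^(24 * 36^k)" by (intro power_increasing) auto
    then have "32 * real (card (cantor_pts N))^2 / 2^N \<le> 32 * 2^(12 * 36^k) / 2^N"
      using card by (intro divide_right_mono mult_left_mono) auto
    also have "\<dots> = 32 / 2^(24 * 36^k)" unfolding N by simp
    also have "\<dots> \<le> 32 / 2^k" using \<open>(2::real)^k \<le> 2^(24 * 36^k)\<close>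
      by (intro divide_left_mono) auto
    finally show ?thesis by (simp add: power_one_over)
  qed
  ultimately show ?thesis using k by (auto elim: rect_cover_mono)
qed

section \<open>Fans of segments in the plane\<close>

definition fan :: "(real \<Rightarrow> real) \<Rightarrow> (real \<times> real) set" where
  "fan a = {(a v + t * v, t) | v t. v \<in> {-1..1} \<and> t \<in> {0..1}}"

lemma fanI: "v \<in> {-1..1} \<Longrightarrow> t \<in> {0..1} \<Longrightarrow> x = a v + t * v \<Longrightarrow> (x, t) \<in> fan a"
  unfolding fan_def by blast

lemma closure_fan_subset: "closure (fan a) \<subseteq> UNIV \<times> {0..1}"
  by (rule closure_minimal) (auto simp: fan_def intro: closed_Times)

lemma compact_closure_fan:
  assumes "\<forall>v\<in>{-1..1}. \<bar>a v\<bar> \<le> A"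
  shows "compact (closure (fan a))"
proof -
  have "fan a \<subseteq> cbox (-(A + 1), 0) (A + 1, 1)"
  proof
    fix z assume "z \<in> fan a"
    then obtain v t where z: "z = (a v + t * v, t)" "v \<in> {-1..1}" "t \<in> {0..1}"
      by (auto simp: fan_def)
    have "\<bar>t * v\<bar> \<le> 1" using z by (auto simp: abs_mult intro: mult_le_one)
    moreover have "\<bar>a v\<bar> \<le> A" using assms z(2) by blast
    ultimately show "z \<in> cbox (-(A + 1), 0) (A + 1, 1)"
      using z by (auto simp: cbox_Pair_eq abs_le_iff)
  qed
  then have "bounded (fan a)" by (rule bounded_subset[rotated]) simp
  then show ?thesis by (simp add: compact_closure)
qed

lemma closure_fan_perturb:
  assumes "\<forall>v\<in>{-1..1}. \<bar>b v - a v\<bar> \<le> \<eta>"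
  shows "closure (fan b) \<subseteq> (\<Union>x\<in>closure (fan a). \<Union>y\<in>{-\<eta>..\<eta>} \<times> {0}. {x + y})"
proof (rule closure_minimal)
  show "closed (\<Union>x\<in>closure (fan a). \<Union>y\<in>{-\<eta>..\<eta>} \<times> {0}. {x + y})"
    by (intro closed_compact_sums compact_Times) auto
  show "fan b \<subseteq> (\<Union>x\<in>closure (fan a). \<Union>y\<in>{-\<eta>..\<eta>} \<times> {0}. {x + y})"
  proof
    fix z assume "z \<in> fan b"
    then obtain v t where z: "z = (b v + t * v, t)" "v \<in> {-1..1}" "t \<in> {0..1}"
      by (auto simp: fan_def)
    have "(a v + t * v, t) \<in> closure (fan a)"
      using z by (intro closure_subset[THEN subsetD] fanI) auto
    moreover have "\<bar>b v - a v\<bar> \<le> \<eta>" using assms z(2) by blast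
    then have "(b v - a v, 0) \<in> {-\<eta>..\<eta>} \<times> {0}" by (auto simp: abs_le_iff)
    moreover have "z = (a v + t * v, t) + (b v - a v, 0)" using z by simp
    ultimately show "z \<in> (\<Union>x\<in>closure (fan a). \<Union>y\<in>{-\<eta>..\<eta>} \<times> {0}. {x + y})" by blast
  qed
qed

lemma closure_Int_open_subset:
  assumes "open U" "S \<inter> U \<subseteq> F" "closed F"
  shows "closure S \<inter> U \<subseteq> F"
proof -
  have "closure S \<inter> U \<subseteq> closure (U \<inter> S)" using open_Int_closure_subset[OF assms(1)] by blast
  also have "\<dots> \<subseteq> F" using assms(2,3) by (intro closure_minimal) auto
  finally show ?thesis .
qed

lemma rect_cover_closure_fan_stable:
  assumes bounded: "\<forall>v\<in>{-1..1}. \<bar>a v\<bar> \<le> A"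
    and cover: "rect_cover (closure (fan a) \<inter> UNIV \<times> {t1..t2}) e"
  shows "\<exists>\<eta>>0. \<forall>b. (\<forall>v\<in>{-1..1}. \<bar>b v - a v\<bar> \<le> \<eta>) \<longrightarrow>
           rect_cover (closure (fan b) \<inter> UNIV \<times> {t1..t2}) e"
proof -
  obtain F where F: "finite F" "\<forall>r\<in>F. proper_rect r"
    "closure (fan a) \<inter> UNIV \<times> {t1..t2} \<subseteq> (\<Union>r\<in>F. rect r)" "sum rect_area F < e"
    using cover unfolding rect_cover_def by blast
  define U where "U = (\<Union>r\<in>F. rect r)"
  define S where "S = closure (fan a) \<inter> UNIV \<times> {t1..t2}"
  have "compact S" unfolding S_def
    by (intro compact_Int_closed[OF compact_closure_fan[OF bounded]] closed_Times closed_UNIV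
        closed_atLeastAtMost)
  moreover have "S \<subseteq> \<Union>{U}" using F(3) unfolding S_def U_def by simp
  moreover have "open U" unfolding U_def by (simp add: open_UN open_rect)
  ultimately obtain \<epsilon> where \<epsilon>: "0 < \<epsilon>" "\<And>x. x \<in> S \<Longrightarrow> \<exists>G\<in>{U}. ball x \<epsilon> \<subseteq> G"
    using Heine_Borel_lemma[of S "{U}"] by auto
  show ?thesis
  proof (intro exI[of _ "\<epsilon>/2"] conjI allI impI)
    fix b assume b: "\<forall>v\<in>{-1..1}. \<bar>b v - a v\<bar> \<le> \<epsilon>/2"
    have "closure (fan b) \<inter> UNIV \<times> {t1..t2} \<subseteq> U"
    proof
      fix z assume z: "z \<in> closure (fan b) \<inter> UNIV \<times> {t1..t2}"
      have "z \<in> (\<Union>x\<in>closure (fan a). \<Union>y\<in>{-\<epsilon>/2..\<epsilon>/2} \<times> {0}. {x + y})"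
        using subsetD[OF closure_fan_perturb[OF b] IntD1[OF z]] by simp
      then obtain x y where x: "x \<in> closure (fan a)" and y: "y \<in> {-\<epsilon>/2..\<epsilon>/2}"
        and zxy: "z = x + (y, 0)"
        by blast
      have "snd x = snd z" using zxy by simp
      then have "x \<in> S" unfolding S_def using x z by (simp add: mem_Times_iff)
      moreover have "z - x = (y, 0)" using zxy by simp
      then have "dist z x = \<bar>y\<bar>" by (simp add: dist_norm norm_Pair)
      then have "z \<in> ball x \<epsilon>" using y \<epsilon>(1) by (auto simp: dist_commute abs_less_iff)
      ultimately show "z \<in> U" using \<epsilon>(2) by blast
    qed
    then have "finite F \<and> (\<forall>r\<in>F. proper_rect r) \<and>
        closure (fan b) \<inter> UNIV \<times> {t1..t2} \<subseteq> (\<Union>r\<in>F. rect r) \<and> sum rect_area F < e"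
      using F unfolding U_def by blast
    then show "rect_cover (closure (fan b) \<inter> UNIV \<times> {t1..t2}) e"
      unfolding rect_cover_def by blast
  qed (use \<epsilon> in simp)
qed

lemma fan_segment:
  assumes "\<bar>w1\<bar> \<le> \<bar>w2\<bar>" "\<bar>w2\<bar> \<le> 1"
  shows "\<exists>p1 p2. \<forall>s\<in>{0..1}. (p1 + s * w1, p2 + s * w2) \<in> fan a"
proof (cases "w2 = 0")
  case True
  then have "w1 = 0" using assms by simp
  have "(a 0 + s * w1, 0 + s * w2) \<in> fan a" if "s \<in> {0..1}" for s
    using True \<open>w1 = 0\<close> by (intro fanI[of 0]) auto
  then show ?thesis by blast
next
  case False
  define v where "v = w1 / w2"
  have v: "v \<in> {-1..1}"
    unfolding v_def using assms False by (auto simp: abs_le_iff divide_le_eq le_divide_eq)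
  have vw: "w2 * v = w1" unfolding v_def using False by simp
  show ?thesis
  proof (cases "w2 > 0")
    case True
    have "(a v + s * w1, 0 + s * w2) \<in> fan a" if s: "s \<in> {0..1}" for s
    proof (rule fanI[OF v])
      show "0 + s * w2 \<in> {0..1}" using s True assms(2) by (auto intro: mult_le_one)
      show "a v + s * w1 = a v + (0 + s * w2) * v" using vw by (simp add: algebra_simps)
    qed
    then show ?thesis by blast
  next
    case False
    with \<open>w2 \<noteq> 0\<close> have "w2 < 0" by simp
    have "(a v + v + s * w1, 1 + s * w2) \<in> fan a" if s: "s \<in> {0..1}" for s
    proof (rule fanI[OF v])
      have "s * (-w2) \<le> 1 * 1" using s \<open>w2 < 0\<close> assms(2) by (intro mult_mono) auto
      moreover have "0 \<le> s * (-w2)" using s \<open>w2 < 0\<close> by (intro mult_nonneg_nonneg) auto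
      ultimately show "1 + s * w2 \<in> {0..1}" by auto
      show "a v + v + s * w1 = a v + (1 + s * w2) * v" using vw by (simp add: algebra_simps)
    qed
    then show ?thesis by blast
  qed
qed

lemma fan_swap_segment:
  assumes "\<bar>w1\<bar> \<le> 1" "\<bar>w2\<bar> \<le> 1"
  shows "\<exists>p1 p2. \<forall>s\<in>{0..1}.
           (p1 + s * w1, p2 + s * w2) \<in> closure (fan a) \<union> prod.swap ` closure (fan a)"
proof (cases "\<bar>w1\<bar> \<le> \<bar>w2\<bar>")
  case True
  then obtain p1 p2 where "\<forall>s\<in>{0..1}. (p1 + s * w1, p2 + s * w2) \<in> fan a"
    using fan_segment[OF True assms(2)] by blast
  then have "\<forall>s\<in>{0..1}. (p1 + s * w1, p2 + s * w2) \<in> closure (fan a)"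
    using closure_subset by blast
  then show ?thesis by blast
next
  case False
  then obtain q1 q2 where q: "\<forall>s\<in>{0..1}. (q1 + s * w2, q2 + s * w1) \<in> fan a"
    using fan_segment[of w2 w1 a] assms(1) by auto
  have "(q2 + s * w1, q1 + s * w2) \<in> prod.swap ` closure (fan a)" if "s \<in> {0..1}" for s
  proof -
    have "(q1 + s * w2, q2 + s * w1) \<in> closure (fan a)" using q that closure_subset by blast
    then show ?thesis by (rule rev_image_eqI) simp
  qed
  then show ?thesis by blast
qed

section \<open>Piecewise affine functions\<close>

text \<open>\<open>grid_index M v = j\<close> means that \<open>v\<close> lies in the cell \<open>[j/M - 1, (j+1)/M - 1[\<close>.\<close>

definition grid_index :: "nat \<Rightarrow> real \<Rightarrow> nat" where
  "grid_index M v = nat \<lfloor>real M * (v + 1)\<rfloor>"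

definition piecewise_affine :: "(real \<Rightarrow> real) set" where
  "piecewise_affine = {g. \<exists>M \<alpha> \<beta>. M > 0 \<and> (\<forall>v. g v = \<alpha> (grid_index M v) + \<beta> (grid_index M v) * v)}"

lemma grid_index_bounds:
  assumes "v \<in> {-1..1}"
  shows "grid_index M v \<le> 2 * M" "real (grid_index M v) / real M - 1 \<le> v"
    and "M > 0 \<Longrightarrow> v < real (grid_index M v) / real M - 1 + 1 / real M"
proof -
  have "0 \<le> real M * (v + 1)" using assms by auto
  moreover have "real M * (v + 1) \<le> real M * 2" using assms by (intro mult_left_mono) auto
  moreover have "real (grid_index M v) = of_int \<lfloor>real M * (v + 1)\<rfloor>"
    unfolding grid_index_def using \<open>0 \<le> real M * (v + 1)\<close> by simp
  ultimately have le: "real (grid_index M v) \<le> real M * (v + 1)"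
    and gt: "real M * (v + 1) < real (grid_index M v) + 1"
    and le2: "real (grid_index M v) \<le> real (2 * M)" by linarith+
  show "grid_index M v \<le> 2 * M" using le2 by linarith
  show "real (grid_index M v) / real M - 1 \<le> v"
    using le assms by (cases "M = 0") (auto simp: divide_le_eq algebra_simps)
  show "v < real (grid_index M v) / real M - 1 + 1 / real M" if "M > 0"
    using gt that by (simp add: field_simps)
qed

lemma grid_index_refine:
  assumes "v \<ge> -1" "L > 0"
  shows "grid_index M v = grid_index (M * L) v div L"
proof -
  have "\<lfloor>real (M * L) * (v + 1)\<rfloor> div int L = \<lfloor>real (M * L) * (v + 1) / real_of_int (int L)\<rfloor>"
    by (rule floor_divide_real_eq_div[symmetric]) simp
  also have "real (M * L) * (v + 1) / real_of_int (int L) = real M * (v + 1)" using assms by simp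
  finally have "\<lfloor>real M * (v + 1)\<rfloor> = \<lfloor>real (M * L) * (v + 1)\<rfloor> div int L" by simp
  moreover have "0 \<le> real (M * L) * (v + 1)" using assms by simp
  ultimately show ?thesis unfolding grid_index_def by (simp add: nat_div_distrib)
qed

lemma piecewise_affine_bounded: "g \<in> piecewise_affine \<Longrightarrow> \<exists>A. \<forall>v\<in>{-1..1}. \<bar>g v\<bar> \<le> A"
proof -
  assume "g \<in> piecewise_affine"
  then obtain M \<alpha> \<beta> where g: "\<And>v. g v = \<alpha> (grid_index M v) + \<beta> (grid_index M v) * v"
    unfolding piecewise_affine_def by blast
  have "\<bar>g v\<bar> \<le> (\<Sum>i\<le>2 * M. \<bar>\<alpha> i\<bar> + \<bar>\<beta> i\<bar>)" if v: "v \<in> {-1..1}" for v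
  proof -
    let ?i = "grid_index M v"
    have "\<bar>g v\<bar> \<le> \<bar>\<alpha> ?i\<bar> + \<bar>\<beta> ?i\<bar> * \<bar>v\<bar>" unfolding g by (metis abs_mult abs_triangle_ineq)
    also have "\<dots> \<le> \<bar>\<alpha> ?i\<bar> + \<bar>\<beta> ?i\<bar>" using v by (auto intro: mult_left_le)
    also have "\<dots> \<le> (\<Sum>i\<le>2 * M. \<bar>\<alpha> i\<bar> + \<bar>\<beta> i\<bar>)"
      using grid_index_bounds(1)[OF v] by (intro member_le_sum) auto
    finally show ?thesis .
  qed
  then show ?thesis by blast
qed

lemma zero_piecewise_affine: "(\<lambda>_. 0) \<in> piecewise_affine"
  unfolding piecewise_affine_def by (intro CollectI exI[of _ 1] exI[of _ "\<lambda>_. 0"]) simp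

text \<open>The approximant agrees with \<open>g + t0 id\<close> at the left end of each cell of a fine grid.\<close>

lemma piecewise_affine_approx_slope:
  assumes g: "g \<in> piecewise_affine" and \<eta>: "\<eta> > 0"
  obtains M c where "M > 0" "\<forall>v\<in>{-1..1}. \<bar>c (grid_index M v) - t0 * v - g v\<bar> \<le> \<eta>"
proof -
  obtain M0 \<alpha> \<beta> where M0: "M0 > 0" and g_eq: "\<And>v. g v = \<alpha> (grid_index M0 v) + \<beta> (grid_index M0 v) * v"
    using g unfolding piecewise_affine_def by blast
  define B where "B = (\<Sum>i\<le>2 * M0. \<bar>\<beta> i\<bar>) + \<bar>t0\<bar>"
  have B0: "0 \<le> B" unfolding B_def by (intro add_nonneg_nonneg sum_nonneg) auto
  define L where "L = nat \<lceil>B / \<eta>\<rceil> + 1"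
  define M where "M = M0 * L"
  have L0: "L > 0" and M: "M > 0" using M0 unfolding L_def M_def by simp_all
  have "B / \<eta> \<le> real L" unfolding L_def by linarith
  also have "real L \<le> real M"
    using M0 mult_right_mono[of 1 "real M0" "real L"] unfolding M_def by simp
  finally have B_le: "B / real M \<le> \<eta>" using \<eta> M by (simp add: divide_le_eq mult.commute)
  define left where "left j = real j / real M - 1" for j
  define c where "c j = g (left j) + t0 * left j" for j
  show ?thesis
  proof (rule that[OF M], intro ballI)
    fix v :: real assume v: "v \<in> {-1..1}"
    let ?j = "grid_index M v" and ?i = "grid_index M0 v"
    have v_left: "left ?j \<le> v" "v - left ?j \<le> 1 / real M"
      using grid_index_bounds[OF v, of M] M unfolding left_def by auto
    have "?i = ?j div L" unfolding M_def using v L0 by (intro grid_index_refine) auto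
    moreover have "grid_index M0 (left ?j) = ?j div L"
      unfolding grid_index_def left_def M_def using M0 by (simp add: floor_divide_of_nat_eq)
    ultimately have "g (left ?j) = \<alpha> ?i + \<beta> ?i * left ?j" using g_eq by simp
    then have "c ?j - t0 * v - g v = (\<beta> ?i + t0) * (left ?j - v)"
      unfolding c_def g_eq[of v] by (simp add: algebra_simps)
    then have "\<bar>c ?j - t0 * v - g v\<bar> = \<bar>\<beta> ?i + t0\<bar> * (v - left ?j)"
      using v_left(1) by (simp add: abs_mult)
    also have "\<dots> \<le> B * (1 / real M)"
    proof (rule mult_mono)
      have "\<bar>\<beta> ?i\<bar> \<le> (\<Sum>i\<le>2 * M0. \<bar>\<beta> i\<bar>)"
        using grid_index_bounds(1)[OF v] by (intro member_le_sum) auto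
      then show "\<bar>\<beta> ?i + t0\<bar> \<le> B" unfolding B_def by linarith
    qed (use v_left B0 in auto)
    also have "\<dots> \<le> \<eta>" using B_le by simp
    finally show "\<bar>c ?j - t0 * v - g v\<bar> \<le> \<eta>" .
  qed
qed

text \<open>If on each cell of mesh \<open>1/M\<close> the slope is \<open>-t0\<close>, then all segments of the fan issued
  from one cell pass through a common point at height \<open>t0\<close>. Near that height the \<open>2M + 1\<close>
  bundles are thin, and the area of a slice of height \<open>2w\<close> is \<open>O(w^2)\<close> independently of \<open>M\<close>.\<close>

lemma focus_estimate:
  assumes "M > 0" "v \<in> {-1..1}"
  shows "\<bar>(t - t0) * v - (\<tau> - t0) * (real (grid_index M v) / real M - 1)\<bar>
    \<le> \<bar>t - \<tau>\<bar> + \<bar>\<tau> - t0\<bar> / real M"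
proof -
  define left where "left = real (grid_index M v) / real M - 1"
  have "\<bar>v - left\<bar> \<le> 1 / real M" using grid_index_bounds[OF assms(2), of M] assms(1)
    unfolding left_def by auto
  have "(t - t0) * v - (\<tau> - t0) * left = (t - \<tau>) * v + (\<tau> - t0) * (v - left)"
    by (simp add: algebra_simps)
  then have "\<bar>(t - t0) * v - (\<tau> - t0) * left\<bar> \<le> \<bar>t - \<tau>\<bar> * \<bar>v\<bar> + \<bar>\<tau> - t0\<bar> * \<bar>v - left\<bar>"
    by (metis abs_mult abs_triangle_ineq)
  also have "\<dots> \<le> \<bar>t - \<tau>\<bar> * 1 + \<bar>\<tau> - t0\<bar> * (1 / real M)"
    using assms(2) \<open>\<bar>v - left\<bar> \<le> 1 / real M\<close> by (intro add_mono mult_left_mono) auto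
  finally show ?thesis unfolding left_def by simp
qed

lemma rect_cover_focused_fan:
  assumes M: "M > 0" and w: "w > 0" and h: "\<And>v. h v = c (grid_index M v) - t0 * v"
  shows "rect_cover (closure (fan h) \<inter> UNIV \<times> {t0 - w..t0 + w}) (1000 * w^2)"
proof -
  define W where "W = 2 * w"
  define dt where "dt = 2 * W / real M"
  define e where "e = 3 * W / real M"
  define left where "left j = real j / real M - 1" for j
  define \<tau> where "\<tau> i = t0 - W + real i * dt" for i
  define x0 where "x0 j i = c j + (\<tau> i - t0) * left j" for j i
  define I where "I = {..2 * M} \<times> {..<M}"
  define R where "R = (\<lambda>(j, i). (x0 j i - 2 * e, x0 j i + 2 * e, \<tau> i - dt, \<tau> i + 2 * dt))"
  have W0: "W > 0" and dt0: "dt > 0" and e0: "e > 0"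
    using w M by (simp_all add: W_def dt_def e_def)
  let ?box = "\<lambda>(j, i). cbox (x0 j i - e, \<tau> i) (x0 j i + e, \<tau> i + dt)"
  have fan_cover: "fan h \<inter> UNIV \<times> {t0 - W<..<t0 + W} \<subseteq> (\<Union>x\<in>I. ?box x)"
  proof
    fix z assume z: "z \<in> fan h \<inter> UNIV \<times> {t0 - W<..<t0 + W}"
    then obtain v t where vt: "z = (h v + t * v, t)" "v \<in> {-1..1}" "t0 - W < t" "t < t0 + W"
      by (auto simp: fan_def)
    define j where "j = grid_index M v"
    obtain i :: nat where i: "\<tau> i \<le> t" "t < \<tau> i + dt"
      using floor_grid_cell[OF dt0, of "t0 - W" t] vt(3) by (auto simp: \<tau>_def algebra_simps)
    have "real i * dt < real M * dt" using i vt(4) unfolding \<tau>_def dt_def using M by simp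
    then have "i < M" using dt0 by simp
    have "0 \<le> real i * dt" using dt0 by simp
    then have "\<bar>\<tau> i - t0\<bar> \<le> W" using i vt(4) unfolding \<tau>_def by (auto simp: abs_le_iff)
    have "h v + t * v - x0 j i = (t - t0) * v - (\<tau> i - t0) * left j"
      unfolding h x0_def j_def by (simp add: algebra_simps)
    then have "\<bar>h v + t * v - x0 j i\<bar> \<le> \<bar>t - \<tau> i\<bar> + \<bar>\<tau> i - t0\<bar> / real M"
      using focus_estimate[OF M vt(2)] unfolding left_def j_def by simp
    also have "\<dots> \<le> dt + W / real M"
      using i M \<open>\<bar>\<tau> i - t0\<bar> \<le> W\<close> by (intro add_mono divide_right_mono) auto
    also have "\<dots> = e" unfolding e_def dt_def by (simp add: field_simps)
    finally have "\<bar>h v + t * v - x0 j i\<bar> \<le> e" .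
    then have "z \<in> ?box (j, i)" using vt(1) i by (auto simp: cbox_Pair_eq abs_le_iff)
    moreover have "(j, i) \<in> I"
      unfolding I_def j_def using grid_index_bounds(1)[OF vt(2)] \<open>i < M\<close> by simp
    ultimately show "z \<in> (\<Union>x\<in>I. ?box x)" by blast
  qed
  have "closure (fan h) \<inter> UNIV \<times> {t0 - w..t0 + w} \<subseteq> closure (fan h) \<inter> UNIV \<times> {t0 - W<..<t0 + W}"
    using w unfolding W_def by auto
  also have "\<dots> \<subseteq> (\<Union>x\<in>I. ?box x)"
  proof (rule closure_Int_open_subset[OF _ fan_cover])
    have "closed (?box x)" for x by (cases x) (simp add: closed_cbox)
    then show "closed (\<Union>x\<in>I. ?box x)" unfolding I_def by (intro closed_UN) auto
  qed (intro open_Times; simp)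
  also have "\<dots> \<subseteq> (\<Union>x\<in>I. rect (R x))"
  proof (intro UN_mono subset_refl)
    show "?box x \<subseteq> rect (R x)" for x
      using e0 dt0 by (cases x) (auto simp: R_def rect_def cbox_Pair_eq)
  qed
  finally have cover: "closure (fan h) \<inter> UNIV \<times> {t0 - w..t0 + w} \<subseteq> (\<Union>x\<in>I. rect (R x))" .
  have "rect_area (R x) = 72 * W^2 / real M ^ 2" for x
  proof -
    have "rect_area (R x) = (4 * e) * (3 * dt)"
      by (simp add: R_def rect_area_def split_beta algebra_simps)
    also have "\<dots> = 72 * W^2 / real M ^ 2"
      by (simp add: e_def dt_def field_simps power2_eq_square)
    finally show ?thesis .
  qed
  then have "(\<Sum>x\<in>I. rect_area (R x)) = real (card I) * (72 * W^2 / real M ^ 2)" by simp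
  also have "\<dots> \<le> (3 * real M ^ 2) * (72 * W^2 / real M ^ 2)"
    using M unfolding I_def by (intro mult_right_mono) (auto simp: card_cartesian_product power2_eq_square)
  also have "\<dots> < 1000 * w^2" using M w by (simp add: W_def power2_eq_square)
  finally have area: "(\<Sum>x\<in>I. rect_area (R x)) < 1000 * w^2" .
  show ?thesis
  proof (rule rect_coverI[OF _ _ cover area])
    show "finite I" unfolding I_def by simp
    show "proper_rect (R x)" for x using e0 dt0 by (simp add: R_def proper_rect_def split_beta)
  qed
qed

lemma piecewise_affine_focus:
  assumes "g \<in> piecewise_affine" "\<eta> > 0" "w > 0"
  shows "\<exists>h\<in>piecewise_affine. (\<forall>v\<in>{-1..1}. \<bar>h v - g v\<bar> \<le> \<eta>) \<and>
           rect_cover (closure (fan h) \<inter> UNIV \<times> {t0 - w..t0 + w}) (1000 * w^2)"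
proof -
  obtain M c where M: "M > 0" and close: "\<forall>v\<in>{-1..1}. \<bar>c (grid_index M v) - t0 * v - g v\<bar> \<le> \<eta>"
    using piecewise_affine_approx_slope[OF assms(1,2)] by blast
  let ?h = "\<lambda>v. c (grid_index M v) - t0 * v"
  have "?h \<in> piecewise_affine"
    unfolding piecewise_affine_def using M by (intro CollectI exI[of _ M] exI[of _ c] exI[of _ "\<lambda>_. -t0"]) simp
  then show ?thesis using close rect_cover_focused_fan[OF M assms(3), of ?h c t0] by auto
qed

section \<open>A planar Besicovitch set\<close>

lemma uniform_limit_telescoping:
  fixes g :: "nat \<Rightarrow> 'a \<Rightarrow> real"
  assumes step: "\<And>n v. v \<in> V \<Longrightarrow> \<bar>g (Suc n) v - g n v\<bar> \<le> \<eta> n - \<eta> (Suc n)"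
    and \<eta>: "\<eta> \<longlonglongrightarrow> 0"
  shows "\<exists>a. \<forall>n. \<forall>v\<in>V. \<bar>a v - g n v\<bar> \<le> \<eta> n"
proof -
  have diff: "\<bar>g k v - g n v\<bar> \<le> \<eta> n - \<eta> k" if "n \<le> k" "v \<in> V" for n k v
    using that(1)
  proof (induction k rule: dec_induct)
    case (step k)
    have "\<bar>g (Suc k) v - g n v\<bar> \<le> \<bar>g (Suc k) v - g k v\<bar> + \<bar>g k v - g n v\<bar>" by linarith
    then show ?case using assms(1)[OF that(2), of k] step.IH by linarith
  qed simp
  have "Cauchy (\<lambda>n. g n v)" if v: "v \<in> V" for v
  proof (rule CauchyI)
    fix e :: real assume "0 < e"
    then obtain M where M: "\<forall>n\<ge>M. \<bar>\<eta> n\<bar> < e / 4" using LIMSEQ_D[OF \<eta>, of "e / 4"] by auto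
    have "\<bar>g m v - g n v\<bar> < e" if "M \<le> m" "M \<le> n" for m n
      using diff[OF that(1) v] diff[OF that(2) v] M[rule_format, of M] M[rule_format, OF that(1)]
        M[rule_format, OF that(2)] by linarith
    then show "\<exists>M. \<forall>m\<ge>M. \<forall>n\<ge>M. norm (g m v - g n v) < e" by auto
  qed
  then have lim: "(\<lambda>n. g n v) \<longlonglongrightarrow> lim (\<lambda>n. g n v)" if "v \<in> V" for v
    using that by (simp add: Cauchy_convergent_iff convergent_LIMSEQ_iff)
  have "\<bar>lim (\<lambda>k. g k v) - g n v\<bar> \<le> \<eta> n" if v: "v \<in> V" for n v
  proof (rule LIMSEQ_le)
    show "(\<lambda>k. \<bar>g k v - g n v\<bar>) \<longlonglongrightarrow> \<bar>lim (\<lambda>k. g k v) - g n v\<bar>"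
      by (intro tendsto_rabs tendsto_diff lim[OF v] tendsto_const)
    show "(\<lambda>k. \<eta> n - \<eta> k) \<longlonglongrightarrow> \<eta> n" using tendsto_diff[OF tendsto_const \<eta>] by simp
    show "\<exists>N. \<forall>k\<ge>N. \<bar>g k v - g n v\<bar> \<le> \<eta> n - \<eta> k" using diff[OF _ v] by blast
  qed
  then show ?thesis by (intro exI[of _ "\<lambda>v. lim (\<lambda>k. g k v)"]) simp
qed

text \<open>A Baire category argument made explicit: the radii are halved at each step, so that the
  limit stays inside every neighbourhood chosen along the way.\<close>

lemma uniform_limit_open_dense:
  fixes D :: "('a \<Rightarrow> real) set" and Q :: "nat \<Rightarrow> ('a \<Rightarrow> real) \<Rightarrow> bool"
  assumes "g0 \<in> D"
    and open_dense: "\<And>n g \<eta>. g \<in> D \<Longrightarrow> \<eta> > 0 \<Longrightarrow> \<exists>h\<in>D. \<exists>\<epsilon>>0.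
           (\<forall>v\<in>V. \<bar>h v - g v\<bar> \<le> \<eta>) \<and> (\<forall>b. (\<forall>v\<in>V. \<bar>b v - h v\<bar> \<le> \<epsilon>) \<longrightarrow> Q n b)"
  shows "\<exists>a. (\<forall>v\<in>V. \<bar>a v - g0 v\<bar> \<le> 1) \<and> (\<forall>n. Q n a)"
proof -
  define good where "good n g \<eta> r \<longleftrightarrow> fst r \<in> D \<and> 0 < snd r \<and> snd r \<le> \<eta>/2 \<and>
      (\<forall>v\<in>V. \<bar>fst r v - g v\<bar> \<le> \<eta>/2) \<and>
      (\<forall>b. (\<forall>v\<in>V. \<bar>b v - fst r v\<bar> \<le> snd r) \<longrightarrow> Q n b)" for n g \<eta> r
  define step where "step n g \<eta> = (SOME r. good n g \<eta> r)" for n g \<eta>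
  have good_exists: "\<exists>r. good n g \<eta> r" if g: "g \<in> D" and \<eta>: "\<eta> > 0" for n g \<eta>
  proof -
    have "\<eta>/2 > 0" using \<eta> by simp
    then obtain h \<epsilon> where "h \<in> D" "\<epsilon> > 0" "\<forall>v\<in>V. \<bar>h v - g v\<bar> \<le> \<eta>/2"
      "\<forall>b. (\<forall>v\<in>V. \<bar>b v - h v\<bar> \<le> \<epsilon>) \<longrightarrow> Q n b"
      using open_dense[OF g] by blast
    then show ?thesis unfolding good_def using \<eta>
      by (intro exI[of _ "(h, min \<epsilon> (\<eta>/2))"]) auto
  qed
  have step: "good n g \<eta> (step n g \<eta>)" if "g \<in> D" "\<eta> > 0" for n g \<eta>
    unfolding step_def by (rule someI_ex) (rule good_exists[OF that])
  define seq where "seq = rec_nat (g0, 1) (\<lambda>n r. step n (fst r) (snd r))"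
  define g where "g n = fst (seq n)" for n
  define \<eta> where "\<eta> n = snd (seq n)" for n
  have seq_Suc: "(g (Suc n), \<eta> (Suc n)) = step n (g n) (\<eta> n)" for n
    by (simp add: seq_def g_def \<eta>_def)
  have g0_\<eta>0: "g 0 = g0" "\<eta> 0 = 1" by (simp_all add: seq_def g_def \<eta>_def)
  have good_n: "g n \<in> D \<and> \<eta> n > 0 \<and> good n (g n) (\<eta> n) (g (Suc n), \<eta> (Suc n))" for n
  proof (induction n)
    case 0
    then show ?case using step[of g0 1 0] \<open>g0 \<in> D\<close> seq_Suc[of 0] by (simp add: g0_\<eta>0)
  next
    case (Suc n)
    then have "g (Suc n) \<in> D \<and> \<eta> (Suc n) > 0" by (simp add: good_def)
    then show ?case using step[of "g (Suc n)" "\<eta> (Suc n)" "Suc n"] seq_Suc[of "Suc n"] by simp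
  qed
  have "\<eta> n \<le> (1/2)^n" for n
    by (induction n) (use good_n in \<open>auto simp: g0_\<eta>0 good_def intro: order_trans\<close>)
  then have "\<eta> \<longlonglongrightarrow> 0"
    by (intro tendsto_sandwich[of "\<lambda>_. 0" \<eta> sequentially "\<lambda>n. (1/2)^n"] LIMSEQ_realpow_zero)
      (auto simp: less_imp_le[OF good_n[THEN conjunct2, THEN conjunct1]])
  moreover have "\<bar>g (Suc n) v - g n v\<bar> \<le> \<eta> n - \<eta> (Suc n)" if "v \<in> V" for n v
    using good_n[of n] that unfolding good_def by auto
  ultimately obtain a where a: "\<And>n v. v \<in> V \<Longrightarrow> \<bar>a v - g n v\<bar> \<le> \<eta> n"
    using uniform_limit_telescoping[of V g \<eta>] by blast
  have "Q n a" for n using good_n[of n] a[of _ "Suc n"] unfolding good_def by auto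
  moreover have "\<bar>a v - g0 v\<bar> \<le> 1" if "v \<in> V" for v using a[OF that, of 0] by (simp add: g0_\<eta>0)
  ultimately show ?thesis by blast
qed

lemma rect_cover_of_strips:
  assumes S: "S \<subseteq> UNIV \<times> {0..1}"
    and strips: "\<And>m k. k \<le> m \<Longrightarrow> rect_cover
      (S \<inter> UNIV \<times> {real k * (1 / (real m + 1))..(real k + 1) * (1 / (real m + 1))})
      (c * (1 / (real m + 1))^2)"
    and "e > 0"
  shows "rect_cover S e"
proof -
  obtain m :: nat where m: "c / e < real m" using reals_Archimedean2 by blast
  define \<delta> where "\<delta> = 1 / (real m + 1)"
  have \<delta>: "\<delta> > 0" "(real m + 1) * \<delta> = 1" by (simp_all add: \<delta>_def)
  have "c * \<delta> < e"
    using m \<open>e > 0\<close> by (simp add: \<delta>_def divide_less_eq pos_divide_less_eq algebra_simps)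
  let ?strip = "\<lambda>k. S \<inter> UNIV \<times> {real k * \<delta>..(real k + 1) * \<delta>}"
  have S_strips: "S \<subseteq> (\<Union>k\<le>m. ?strip k)"
  proof
    fix z assume z: "z \<in> S"
    then have t: "0 \<le> snd z" "snd z \<le> 1" using S by auto
    obtain i :: nat where i: "real i * \<delta> \<le> snd z" "snd z < (real i + 1) * \<delta>"
      using floor_grid_cell[OF \<delta>(1), of 0 "snd z"] t by auto
    define k where "k = min i m"
    have "real k * \<delta> \<le> real i * \<delta>" using \<delta>(1) by (simp add: k_def)
    then have "real k * \<delta> \<le> snd z" using i(1) by linarith
    moreover have "snd z \<le> (real k + 1) * \<delta>"
    proof (cases "i \<le> m")
      case True
      then show ?thesis using i(2) by (simp add: k_def)
    next
      case False
      then show ?thesis using t(2) \<delta>(2) by (simp add: k_def)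
    qed
    ultimately show "z \<in> (\<Union>k\<le>m. ?strip k)" using z
      by (cases z) (auto simp: k_def intro!: bexI[of _ k])
  qed
  have "rect_cover (\<Union>k\<le>m. ?strip k) (real (Suc m) * (c * \<delta>^2))"
    using strips unfolding \<delta>_def by (intro rect_cover_UN_atMost)
  moreover have "real (Suc m) * (c * \<delta>^2) = c * \<delta> * ((real m + 1) * \<delta>)"
    by (simp add: power2_eq_square algebra_simps)
  ultimately have "rect_cover (\<Union>k\<le>m. ?strip k) (c * \<delta>)" by (simp only: \<delta>(2) mult_1_right)
  then show ?thesis by (rule rect_cover_mono) (use S_strips \<open>c * \<delta> < e\<close> in auto)
qed

text \<open>Condition \<open>n\<close>, with \<open>(m, k) = prod_decode n\<close>, covers the \<open>k\<close>-th horizontal strip of height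
  \<open>1/(m+1)\<close> by area \<open>250/(m+1)^2\<close>; since all pairs occur, the whole fan of the limit is covered
  by area \<open>250/(m+1)\<close> for every \<open>m\<close>.\<close>

theorem besicovitch_planar:
  "\<exists>a. (\<forall>v\<in>{-1..1}. \<bar>a v\<bar> \<le> 1) \<and> (\<forall>e>0. rect_cover (closure (fan a)) e)"
proof -
  define \<delta> where "\<delta> m = 1 / (real m + 1)" for m :: nat
  define strip :: "nat \<Rightarrow> (real \<times> real) set" where
    "strip n = (case prod_decode n of (m, k) \<Rightarrow> UNIV \<times> {real k * \<delta> m..(real k + 1) * \<delta> m})" for n
  define bound where "bound n = (case prod_decode n of (m, k) \<Rightarrow> 250 * (\<delta> m)^2)" for n
  let ?Q = "\<lambda>n b. rect_cover (closure (fan b) \<inter> strip n) (bound n)"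
  have "\<exists>h\<in>piecewise_affine. \<exists>\<epsilon>>0. (\<forall>v\<in>{-1..1}. \<bar>h v - g v\<bar> \<le> \<eta>) \<and>
      (\<forall>b. (\<forall>v\<in>{-1..1}. \<bar>b v - h v\<bar> \<le> \<epsilon>) \<longrightarrow> ?Q n b)"
    if g: "g \<in> piecewise_affine" and \<eta>: "\<eta> > 0" for n g \<eta>
  proof -
    obtain m k where mk: "prod_decode n = (m, k)" by force
    define w where "w = \<delta> m / 2"
    define t0 where "t0 = (real k + 1/2) * \<delta> m"
    have "w > 0" by (simp add: w_def \<delta>_def)
    have "strip n = UNIV \<times> {t0 - w..t0 + w}" "bound n = 1000 * w^2"
      by (simp_all add: strip_def bound_def mk t0_def w_def algebra_simps power2_eq_square)
    moreover obtain h where h: "h \<in> piecewise_affine" "\<forall>v\<in>{-1..1}. \<bar>h v - g v\<bar> \<le> \<eta>"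
      "rect_cover (closure (fan h) \<inter> UNIV \<times> {t0 - w..t0 + w}) (1000 * w^2)"
      using piecewise_affine_focus[OF g \<eta> \<open>w > 0\<close>] by blast
    moreover obtain A where "\<forall>v\<in>{-1..1}. \<bar>h v\<bar> \<le> A" using piecewise_affine_bounded[OF h(1)] by blast
    ultimately show ?thesis using rect_cover_closure_fan_stable[OF _ h(3)] by metis
  qed
  then obtain a where a: "\<forall>v\<in>{-1..1}. \<bar>a v - 0\<bar> \<le> 1" "\<And>n. ?Q n a"
    using uniform_limit_open_dense[OF zero_piecewise_affine, of "{-1..1}" ?Q] by blast
  have "rect_cover (closure (fan a)) e" if "e > 0" for e
  proof (rule rect_cover_of_strips[OF closure_fan_subset _ that])
    fix m k :: nat
    show "rect_cover (closure (fan a) \<inter>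
        UNIV \<times> {real k * (1 / (real m + 1))..(real k + 1) * (1 / (real m + 1))})
        (250 * (1 / (real m + 1))^2)"
      using a(2)[of "prod_encode (m, k)"] by (simp add: strip_def bound_def \<delta>_def)
  qed
  then show ?thesis using a(1) by auto
qed

section \<open>Lifting planar sets to higher dimensions\<close>

definition lift_plane :: "(real \<times> real) set \<Rightarrow> real \<Rightarrow> 'm \<Rightarrow> ((real^'m::finite) \<times> real) set" where
  "lift_plane P L i = {z. (fst z $ i, snd z) \<in> P \<and> (\<forall>j. j \<noteq> i \<longrightarrow> \<bar>fst z $ j\<bar> \<le> L)}"

lemma lift_plane_mono: "P \<subseteq> Q \<Longrightarrow> L \<le> L' \<Longrightarrow> lift_plane P L i \<subseteq> lift_plane Q L' i"
  unfolding lift_plane_def by fastforce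

definition lift_rect :: "real \<Rightarrow> 'm \<Rightarrow> real \<times> real \<times> real \<times> real \<Rightarrow> ((real^'m::finite) \<times> real) set"
  where "lift_rect L i r = (case r of (a, b, c, d) \<Rightarrow>
    cbox ((\<chi> j. if j = i then a else -L), c) ((\<chi> j. if j = i then b else L), d))"

lemma lift_plane_rect_subset: "lift_plane (rect r) L i \<subseteq> lift_rect L i r"
proof
  fix z assume z: "z \<in> lift_plane (rect r) L i"
  obtain a b c d where r: "r = (a, b, c, d)" by (cases r)
  have "fst z \<in> cbox (\<chi> j. if j = i then a else -L) (\<chi> j. if j = i then b else L)"
    unfolding mem_box_cart(2)
  proof
    fix j show "(\<chi> j. if j = i then a else -L) $ j \<le> fst z $ j \<and>
        fst z $ j \<le> (\<chi> j. if j = i then b else L) $ j"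
      using z unfolding r rect_def lift_plane_def by (cases "j = i") (auto simp: abs_le_iff)
  qed
  moreover have "snd z \<in> cbox c d" using z unfolding r rect_def lift_plane_def by auto
  ultimately show "z \<in> lift_rect L i r" unfolding r lift_rect_def by (cases z) (simp add: cbox_Pair_eq)
qed

lemma emeasure_lift_rect:
  fixes i :: "'m::finite"
  assumes "proper_rect r" "L \<ge> 0"
  shows "emeasure lborel (lift_rect L i r) = ennreal (rect_area r * (2 * L)^(CARD('m) - 1))"
proof -
  obtain a b c d where r: "r = (a, b, c, d)" by (cases r)
  have "a \<le> b" "c \<le> d" using assms(1) by (simp_all add: r proper_rect_def)
  define lo :: "real^'m" where "lo = (\<chi> j. if j = i then a else -L)"
  define hi :: "real^'m" where "hi = (\<chi> j. if j = i then b else L)"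
  have "lo \<in> cbox lo hi" using \<open>a \<le> b\<close> assms(2) by (simp add: mem_box_cart(2) lo_def hi_def)
  then have "cbox lo hi \<noteq> {}" by blast
  have "emeasure lborel (cbox (lo, c) (hi, d)) = ennreal (measure lborel (cbox (lo, c) (hi, d)))"
    using emeasure_lborel_cbox_finite[of "(lo, c)" "(hi, d)"] by (simp add: emeasure_eq_ennreal_measure)
  also have "measure lborel (cbox (lo, c) (hi, d)) = measure lborel (cbox lo hi) * (d - c)"
    using \<open>c \<le> d\<close> by (simp add: content_Pair)
  also have "measure lborel (cbox lo hi) = (\<Prod>j\<in>UNIV. hi $ j - lo $ j)"
    by (rule content_cbox_cart[OF \<open>cbox lo hi \<noteq> {}\<close>])
  also have "\<dots> = (hi $ i - lo $ i) * (\<Prod>j\<in>UNIV - {i}. hi $ j - lo $ j)"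
    by (rule prod.remove) auto
  also have "(\<Prod>j\<in>UNIV - {i}. hi $ j - lo $ j) = (\<Prod>j\<in>UNIV - {i}. 2 * L)"
    by (rule prod.cong) (auto simp: lo_def hi_def)
  also have "\<dots> = (2 * L)^(CARD('m) - 1)" by (simp add: card_Diff_singleton)
  finally show ?thesis by (simp add: r lift_rect_def rect_area_def lo_def hi_def algebra_simps)
qed

lemma null_lift_plane:
  fixes i :: "'m::finite" and S :: "((real^'m) \<times> real) set"
  assumes P: "\<And>e. e > 0 \<Longrightarrow> rect_cover P e" and L: "L \<ge> 0" and S: "S \<subseteq> lift_plane P L i"
  shows "emeasure lborel S = 0"
proof -
  define C where "C = (2 * L)^(CARD('m) - 1)"
  have C: "C \<ge> 0" unfolding C_def using L by simp
  have "emeasure lborel S \<le> ennreal \<epsilon>" if \<epsilon>: "\<epsilon> > 0" for \<epsilon>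
  proof -
    obtain F where F: "finite F" "\<forall>r\<in>F. proper_rect r" "P \<subseteq> (\<Union>r\<in>F. rect r)"
      "sum rect_area F < \<epsilon> / (C + 1)"
      using P[of "\<epsilon> / (C + 1)"] \<epsilon> C unfolding rect_cover_def by auto
    have "S \<subseteq> (\<Union>r\<in>F. lift_plane (rect r) L i)"
      using S F(3) unfolding lift_plane_def by blast
    also have "\<dots> \<subseteq> (\<Union>r\<in>F. lift_rect L i r)" using lift_plane_rect_subset by blast
    finally have "emeasure lborel S \<le> emeasure lborel (\<Union>r\<in>F. lift_rect L i r)"
      using F(1) by (intro emeasure_mono) (auto simp: lift_rect_def split: prod.splits)
    also have "\<dots> \<le> (\<Sum>r\<in>F. emeasure lborel (lift_rect L i r))"
      using F(1) by (intro emeasure_subadditive_finite) (auto simp: lift_rect_def split: prod.splits)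
    also have "\<dots> = (\<Sum>r\<in>F. ennreal (rect_area r * C))"
      using F(2) L unfolding C_def by (intro sum.cong refl emeasure_lift_rect) auto
    also have "\<dots> = ennreal (sum rect_area F * C)"
      using F(2) C by (simp add: sum_distrib_right rect_area_nonneg sum_ennreal)
    also have "sum rect_area F * C \<le> \<epsilon>"
    proof -
      have "sum rect_area F * C \<le> \<epsilon> / (C + 1) * C" using F(4) C by (intro mult_right_mono) auto
      also have "\<dots> \<le> \<epsilon>" using \<epsilon> C by (simp add: field_simps)
      finally show ?thesis .
    qed
    finally show ?thesis by (simp add: ennreal_leI)
  qed
  then show ?thesis by (metis ennreal_le_epsilon ennreal_0 add_0 le_zero_eq)
qed

lemma compact_lift_plane:
  fixes i :: "'m::finite"
  assumes P: "compact P"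
  shows "compact (lift_plane P L i)"
proof -
  have "closed (lift_plane P L i)"
  proof -
    have "lift_plane P L i = (\<lambda>z. (fst z $ i, snd z)) -` P \<inter> (\<Inter>j\<in>- {i}. {z. \<bar>fst z $ j\<bar> \<le> L})"
      unfolding lift_plane_def by auto
    also have "closed \<dots>"
        by (intro closed_Int closed_INT ballI closed_vimage compact_imp_closed[OF P]
          closed_Collect_le continuous_intros)
    finally show ?thesis .
  qed
  moreover obtain A where A: "P \<subseteq> cbox (-A) A"
    using bounded_subset_cbox_symmetric compact_imp_bounded[OF P] by metis
  define R where "R = max L (fst A)"
  have "lift_plane P L i \<subseteq> cbox (-(\<chi> j. R), -snd A) ((\<chi> j. R), snd A)"
  proof
    fix z assume z: "z \<in> lift_plane P L i"
    then have "(fst z $ i, snd z) \<in> cbox (-A) A" using A unfolding lift_plane_def by auto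
    then have "\<bar>fst z $ i\<bar> \<le> fst A \<and> \<bar>snd z\<bar> \<le> snd A"
      by (cases A) (auto simp: cbox_Pair_eq abs_le_iff)
    then have "\<bar>fst z $ i\<bar> \<le> fst A" "\<bar>snd z\<bar> \<le> snd A" by auto
    moreover have "\<bar>fst z $ j\<bar> \<le> L" if "j \<noteq> i" for j using z that unfolding lift_plane_def by auto
    ultimately have bound: "\<bar>fst z $ j\<bar> \<le> R" for j
      unfolding R_def by (cases "j = i") (simp_all add: le_max_iff_disj)
    have "fst z \<in> cbox (-(\<chi> j. R)) (\<chi> j. R)"
      unfolding mem_box_cart(2)
    proof
      fix j show "(-(\<chi> j. R)) $ j \<le> fst z $ j \<and> fst z $ j \<le> (\<chi> j. R) $ j"
        using bound[of j] by (auto simp: abs_le_iff)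
    qed
    then show "z \<in> cbox (-(\<chi> j. R), -snd A) ((\<chi> j. R), snd A)"
      using \<open>\<bar>snd z\<bar> \<le> snd A\<close> by (cases z) (simp add: cbox_Pair_eq abs_le_iff)
  qed
  then have "bounded (lift_plane P L i)" by (rule bounded_subset[rotated]) simp
  ultimately show ?thesis by (simp add: compact_eq_bounded_closed)
qed

text \<open>A unit segment in \<open>\<real>^d\<close> projects onto a segment of length at most one in the plane of
  coordinates \<open>i\<close> and \<open>d\<close>, and its other coordinates move by at most one; so it fits into the lift
  of a planar set containing translates of all such short segments.\<close>

lemma lift_plane_unit_segment:
  fixes u :: "(real^'m::finite) \<times> real"
  assumes "norm u = 1"
    and P: "\<And>w1 w2. \<bar>w1\<bar> \<le> 1 \<Longrightarrow> \<bar>w2\<bar> \<le> 1 \<Longrightarrow> \<exists>p1 p2. \<forall>s\<in>{0..1}. (p1 + s * w1, p2 + s * w2) \<in> P"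
  shows "\<exists>x. closed_segment x (x + u) \<subseteq> lift_plane P 1 i"
proof -
  obtain ux ut where u: "u = (ux, ut)" by (cases u)
  have "norm ux \<le> 1" "\<bar>ut\<bar> \<le> 1"
    using assms(1) norm_fst_le[of ux ut] norm_snd_le[of ut ux] by (auto simp: u)
  then have comp: "\<bar>ux $ j\<bar> \<le> 1" for j using component_le_norm_cart[of ux j] by linarith
  obtain p1 p2 where p: "\<forall>s\<in>{0..1}. (p1 + s * ux $ i, p2 + s * ut) \<in> P"
    using P[OF comp \<open>\<bar>ut\<bar> \<le> 1\<close>] by blast
  define x0 :: "real^'m" where "x0 = (\<chi> j. if j = i then p1 else 0)"
  have "y \<in> lift_plane P 1 i" if y: "y \<in> closed_segment (x0, p2) ((x0, p2) + u)" for y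
  proof -
    obtain s where s: "0 \<le> s" "s \<le> 1" "y = (1 - s) *\<^sub>R (x0, p2) + s *\<^sub>R ((x0, p2) + u)"
      using y unfolding in_segment by blast
    then have y: "y = (x0 + s *\<^sub>R ux, p2 + s * ut)" by (simp add: u algebra_simps)
    have "\<bar>s * ux $ j\<bar> \<le> 1" for j
      using s(1,2) comp[of j] by (auto simp: abs_mult intro: mult_le_one)
    then show ?thesis using p s(1,2) unfolding y lift_plane_def x0_def by auto
  qed
  then show ?thesis by blast
qed

section \<open>The Kakeya set\<close>

definition cantor_segments :: "((real^'m::finite) \<times> real) set" where
  "cantor_segments = {(\<alpha> + t *\<^sub>R v, t) | v \<alpha> t. v \<in> cantor_cube \<and> \<alpha> \<in> cantor_cube \<and> t \<in> {0..1}}"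

lemma compact_cantor_segments: "compact (cantor_segments :: ((real^'m::finite) \<times> real) set)"
proof -
  have "cantor_segments = (\<lambda>(v, \<alpha>, t). (\<alpha> + t *\<^sub>R v, t)) ` (cantor_cube \<times> cantor_cube \<times> {0..1::real})"
    unfolding cantor_segments_def by force
  also have "compact \<dots>"
    by (intro compact_continuous_image compact_Times compact_cantor_cube compact_Icc)
      (simp add: split_beta continuous_intros)
  finally show ?thesis .
qed

lemma cantor_cube_lines:
  "(cantor_cube :: (real^'m::finite) set) \<times> cantor_cube \<subseteq> line_set (cantor_segments :: (_ \<times> real) set)"
proof
  fix z :: "(real^'m) \<times> (real^'m)" assume "z \<in> cantor_cube \<times> cantor_cube"
  then obtain v \<alpha> where z: "z = (v, \<alpha>)" "v \<in> cantor_cube" "\<alpha> \<in> cantor_cube" by auto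
  define w where "w = (v, 1::real)"
  define c where "c = 1 / norm w"
  have "norm w \<ge> 1" using norm_snd_le[of "1::real" v] by (simp add: w_def)
  moreover have "w \<noteq> 0" using \<open>norm w \<ge> 1\<close> by auto
  ultimately have c: "0 < c" "c \<le> 1" "norm (c *\<^sub>R w) = 1"
    unfolding c_def by (simp_all add: divide_le_eq_1)
  define p where "p = (\<alpha>, 0::real)"
  have "closed_segment p (p + c *\<^sub>R w) \<subseteq> kline v \<alpha> \<inter> cantor_segments"
  proof
    fix y assume "y \<in> closed_segment p (p + c *\<^sub>R w)"
    then obtain s where s: "0 \<le> s" "s \<le> 1" "y = (\<alpha> + (s * c) *\<^sub>R v, s * c)"
      unfolding closed_segment_def p_def w_def by (auto simp: algebra_simps)
    have "s * c \<in> {0..1}" using s c by (auto intro: mult_le_one)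
    then show "y \<in> kline v \<alpha> \<inter> cantor_segments"
      unfolding s(3) kline_def cantor_segments_def using z by blast
  qed
  moreover have "dist p (p + c *\<^sub>R w) = 1" using c(3) by (simp add: dist_norm)
  ultimately show "z \<in> line_set cantor_segments" unfolding line_set_def z by blast
qed

lemma line_set_mono: "K \<subseteq> K' \<Longrightarrow> line_set K \<subseteq> line_set K'"
  unfolding line_set_def by blast

lemma cantor_segments_subset:
  "(cantor_segments :: ((real^'m::finite) \<times> real) set) \<subseteq> lift_plane (sweep sparse_cantor) 2 i"
proof
  fix z :: "(real^'m) \<times> real" assume "z \<in> cantor_segments"
  then obtain v \<alpha> t where z: "z = (\<alpha> + t *\<^sub>R v, t)" "v \<in> cantor_cube" "\<alpha> \<in> cantor_cube" "t \<in> {0..1}"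
    unfolding cantor_segments_def by blast
  have "(fst z $ i, snd z) \<in> sweep sparse_cantor"
    using z unfolding sweep_def cantor_cube_def by auto
  moreover have "\<bar>fst z $ j\<bar> \<le> 2" for j
  proof -
    have "0 \<le> t * v $ j" "t * v $ j \<le> 1"
      using z(4) cantor_cube_subset[OF z(2), of j] by (auto intro: mult_le_one)
    then show ?thesis using z(1) cantor_cube_subset[OF z(3), of j] by simp
  qed
  ultimately show "z \<in> lift_plane (sweep sparse_cantor) 2 i" unfolding lift_plane_def by auto
qed

section \<open>Packing dimension of the set of lines\<close>

lemma line_dist_triangle: "line_dist p r \<le> line_dist p q + line_dist r q"
proof -
  have "norm (a - c) \<le> norm (a - b) + norm (c - b)" for a b c :: "'v::real_normed_vector"
    using norm_triangle_ineq[of "a - b" "b - c"] by (simp add: norm_minus_commute)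
  then have "norm (fst p - fst r) \<le> norm (fst p - fst q) + norm (fst r - fst q)"
    and "norm (snd p - snd r) \<le> norm (snd p - snd q) + norm (snd r - snd q)" by blast+
  then show ?thesis unfolding line_dist_def split_beta by linarith
qed

lemma dist_le_line_dist:
  fixes p q :: "(real^'m::finite) \<times> (real^'m)"
  shows "dist p q \<le> line_dist p q"
proof -
  have "dist p q = norm (fst p - fst q, snd p - snd q)" by (cases p, cases q) (simp add: dist_norm)
  also have "\<dots> \<le> norm (fst p - fst q) + norm (snd p - snd q)" by (rule norm_Pair_le)
  finally show ?thesis by (simp add: line_dist_def split_beta)
qed

lemma packing_premeasure_eq_infinity:
  assumes triangle: "\<And>x y z. d x z \<le> d x y + d z y"
    and many: "\<And>\<delta> N. \<delta> > 0 \<Longrightarrow> \<exists>r Z. 0 < r \<and> r \<le> \<delta> \<and> finite Z \<and> Z \<subseteq> E \<and>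
      (\<forall>x\<in>Z. \<forall>y\<in>Z. x \<noteq> y \<longrightarrow> 2 * r < d x y) \<and> real N \<le> real (card Z) * (2 * r) powr s"
  shows "packing_premeasure d s E = \<infinity>"
  unfolding packing_premeasure_def infinity_ennreal_def
proof (rule INF_top_conv(1)[THEN iffD2], intro ballI ennreal_SUP_eq_top)
  fix \<delta> :: real and N :: nat assume "\<delta> \<in> {0<..}"
  then obtain r Z where rZ: "0 < r" "r \<le> \<delta>" "finite Z" "Z \<subseteq> E"
    "\<forall>x\<in>Z. \<forall>y\<in>Z. x \<noteq> y \<longrightarrow> 2 * r < d x y" "real N \<le> real (card Z) * (2 * r) powr s"
    using many[of \<delta> N] by auto
  let ?P = "(\<lambda>x. (x, r)) ` Z"
  have disjoint: "mball d x r \<inter> mball d y r = {}" if "x \<in> Z" "y \<in> Z" "x \<noteq> y" for x y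
  proof -
    have "2 * r < d x y" using rZ(5) that by blast
    then have "False" if "d x z \<le> r" "d y z \<le> r" for z
      using triangle[of x y z] that by linarith
    then show ?thesis unfolding mball_def by blast
  qed
  have "inj_on (\<lambda>x. (x, r)) Z" by (auto intro: inj_onI)
  then have "(\<Sum>(x, r')\<in>?P. ennreal ((2 * r') powr s)) = (\<Sum>x\<in>Z. ennreal ((2 * r) powr s))"
    by (simp add: sum.reindex)
  also have "\<dots> = ennreal (\<Sum>x\<in>Z. (2 * r) powr s)" by (rule sum_ennreal) simp
  also have "\<dots> = ennreal (real (card Z) * (2 * r) powr s)" by simp
  finally have sum_eq: "(\<Sum>(x, r')\<in>?P. ennreal ((2 * r') powr s)) = ennreal (real (card Z) * (2 * r) powr s)" .
  have "of_nat N \<le> (\<Sum>(x, r')\<in>?P. ennreal ((2 * r') powr s))"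
    unfolding sum_eq ennreal_of_nat_eq_real_of_nat using rZ(6) by (rule ennreal_leI)
  moreover have "finite ?P" using rZ(3) by simp
  moreover have "\<forall>(x, r')\<in>?P. x \<in> E \<and> 0 < r' \<and> r' \<le> \<delta>" using rZ(1,2,4) by auto
  moreover have "\<forall>(x, r1)\<in>?P. \<forall>(y, r2)\<in>?P. (x, r1) \<noteq> (y, r2) \<longrightarrow> mball d x r1 \<inter> mball d y r2 = {}"
    using disjoint by auto
  ultimately show "\<exists>P\<in>{P. finite P \<and> (\<forall>(x, r)\<in>P. x \<in> E \<and> 0 < r \<and> r \<le> \<delta>) \<and>
      (\<forall>(x, r)\<in>P. \<forall>(y, t)\<in>P. (x, r) \<noteq> (y, t) \<longrightarrow> mball d x r \<inter> mball d y t = {})}.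
      of_nat N \<le> (\<Sum>(x, r)\<in>P. ennreal ((2 * r) powr s))"
    by blast
qed


lemma Baire_cover_somewhere_dense:
  fixes E :: "'a::{real_normed_vector,heine_borel} set" and F :: "nat \<Rightarrow> 'a set"
  assumes "closed E" "E \<noteq> {}" "E \<subseteq> (\<Union>i. F i)"
  shows "\<exists>i x \<rho>. x \<in> E \<and> \<rho> > 0 \<and> E \<inter> ball x \<rho> \<subseteq> closure (F i)"
proof (rule ccontr)
  assume nowhere: "\<not> ?thesis"
  let ?G = "range (\<lambda>i. E - closure (F i))"
  have "E \<subseteq> closure (\<Inter>?G)"
  proof (rule Baire[OF \<open>closed E\<close>])
    fix T assume "T \<in> ?G"
    then obtain i where T: "T = E - closure (F i)" by auto
    then have "T = E \<inter> - closure (F i)" by auto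
    then have "openin (top_of_set E) T" by (simp add: openin_open_Int open_Compl)
    moreover have "E \<subseteq> closure T"
    proof
      fix x assume "x \<in> E"
      show "x \<in> closure T" unfolding closure_approachable
      proof (intro allI impI)
        fix e :: real assume "e > 0"
        then obtain y where "y \<in> E" "y \<in> ball x e" "y \<notin> closure (F i)"
          using nowhere \<open>x \<in> E\<close> by blast
        then show "\<exists>y\<in>T. dist y x < e" unfolding T by (auto simp: dist_commute)
      qed
    qed
    ultimately show "openin (top_of_set E) T \<and> E \<subseteq> closure T" by blast
  qed (intro countable_image countableI_type)
  moreover obtain x where "x \<in> E" using \<open>E \<noteq> {}\<close> by blast
  ultimately have "x \<in> closure (\<Inter>?G)" by blast
  then have "\<Inter>?G \<noteq> {}" by (metis closure_empty empty_iff)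
  then obtain y where y: "y \<in> \<Inter>?G" by blast
  then have "y \<in> E" by auto
  then obtain i where "y \<in> F i" using assms(3) by blast
  moreover have "y \<notin> closure (F i)" using y by auto
  ultimately show False using closure_subset by blast
qed

lemma packing_measure_eq_infinity:
  fixes E :: "'a::{real_normed_vector,heine_borel} set"
  assumes "closed E" "E \<noteq> {}" "E \<subseteq> X"
    and dense_infinite: "\<And>A x \<rho>. x \<in> E \<Longrightarrow> \<rho> > 0 \<Longrightarrow> E \<inter> ball x \<rho> \<subseteq> closure A \<Longrightarrow>
      packing_premeasure d s A = \<infinity>"
  shows "packing_measure d s X = \<infinity>"
proof -
  have "(\<Sum>i. packing_premeasure d s (F i)) = \<infinity>" if cover: "X \<subseteq> (\<Union>i. F i)" for F
  proof -
    have "E \<subseteq> (\<Union>i. F i)" using assms(3) cover by (rule order_trans)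
    then obtain i x \<rho> where "x \<in> E" "\<rho> > 0" "E \<inter> ball x \<rho> \<subseteq> closure (F i)"
      using Baire_cover_somewhere_dense[OF assms(1,2)] by blast
    then have "packing_premeasure d s (F i) = \<infinity>" by (rule dense_infinite)
    moreover have "(\<Sum>j\<in>{i}. packing_premeasure d s (F j)) \<le> (\<Sum>j. packing_premeasure d s (F j))"
      by (rule sum_le_suminf) (auto intro: summableI)
    ultimately show ?thesis by (simp add: top_unique)
  qed
  then show ?thesis unfolding packing_measure_def by (simp add: infinity_ennreal_def)
qed

lemma separated_approx:
  fixes Y A :: "'a::metric_space set"
  assumes "finite Y" "Y \<subseteq> closure A" "h > 0"
    and sep: "\<And>y y'. y \<in> Y \<Longrightarrow> y' \<in> Y \<Longrightarrow> y \<noteq> y' \<Longrightarrow> h \<le> dist y y'"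
  shows "\<exists>Z\<subseteq>A. finite Z \<and> card Z = card Y \<and> (\<forall>z\<in>Z. \<forall>z'\<in>Z. z \<noteq> z' \<longrightarrow> h / 2 < dist z z')"
proof -
  have "\<exists>z\<in>A. dist z y < h / 4" if "y \<in> Y" for y
  proof -
    have "y \<in> closure A" "h / 4 > 0" using assms(2,3) that by auto
    then show ?thesis by (metis closure_approachable)
  qed
  then obtain f where f: "\<And>y. y \<in> Y \<Longrightarrow> f y \<in> A \<and> dist (f y) y < h / 4" by metis
  have far: "h / 2 < dist (f y) (f y')" if "y \<in> Y" "y' \<in> Y" "y \<noteq> y'" for y y'
  proof -
    have "dist y y' \<le> dist y (f y) + dist (f y) y'" by (rule dist_triangle)
    moreover have "dist (f y) y' \<le> dist (f y) (f y') + dist (f y') y'" by (rule dist_triangle)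
    ultimately show ?thesis
      using sep[OF that] f[OF that(1)] f[OF that(2)] by (simp add: dist_commute)
  qed
  have "inj_on f Y"
  proof (rule inj_onI)
    fix y y' assume y: "y \<in> Y" "y' \<in> Y" "f y = f y'"
    show "y = y'"
    proof (rule ccontr)
      assume "y \<noteq> y'"
      then have "h / 2 < dist (f y) (f y')" using far y(1,2) by blast
      then show False using y(3) assms(3) by simp
    qed
  qed
  moreover have "\<forall>z\<in>f ` Y. \<forall>z'\<in>f ` Y. z \<noteq> z' \<longrightarrow> h / 2 < dist z z'" using far by blast
  moreover have "f ` Y \<subseteq> A" using f by blast
  ultimately show ?thesis using assms(1) by (intro exI[of _ "f ` Y"]) (simp add: card_image)
qed

lemma dist_grid_points:
  fixes p :: "'n::finite \<Rightarrow> real" and \<iota> \<iota>' :: "'n \<Rightarrow> nat"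
  assumes "h > 0" "\<iota> \<noteq> \<iota>'"
  shows "h \<le> dist (\<chi> j. p j + real (\<iota> j) * h) (\<chi> j. p j + real (\<iota>' j) * h)"
proof -
  from \<open>\<iota> \<noteq> \<iota>'\<close> obtain j where j: "\<iota> j \<noteq> \<iota>' j" by (auto simp: fun_eq_iff)
  have diff: "((\<chi> j. p j + real (\<iota> j) * h) - (\<chi> j. p j + real (\<iota>' j) * h)) $ j
      = (real (\<iota> j) - real (\<iota>' j)) * h"
    by (simp add: algebra_simps)
  have "1 \<le> \<bar>real (\<iota> j) - real (\<iota>' j)\<bar>" using j by linarith
  then have "h \<le> \<bar>real (\<iota> j) - real (\<iota>' j)\<bar> * h" using assms(1) by (simp add: mult_le_cancel_right1)
  also have "\<dots> = \<bar>((\<chi> j. p j + real (\<iota> j) * h) - (\<chi> j. p j + real (\<iota>' j) * h)) $ j\<bar>"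
    using assms(1) unfolding diff by (simp add: abs_mult)
  also have "\<dots> \<le> dist (\<chi> j. p j + real (\<iota> j) * h) (\<chi> j. p j + real (\<iota>' j) * h)"
    unfolding dist_norm by (rule component_le_norm_cart)
  finally show ?thesis .
qed

lemma dist_le_componentwise:
  fixes x y :: "real^'n::finite"
  assumes "\<And>j. \<bar>y $ j - x $ j\<bar> \<le> c"
  shows "dist y x \<le> real CARD('n) * c"
proof -
  have "dist y x \<le> (\<Sum>j\<in>UNIV. \<bar>(y - x) $ j\<bar>)" unfolding dist_norm by (rule norm_le_l1_cart)
  also have "\<dots> \<le> (\<Sum>j\<in>(UNIV :: 'n set). c)" by (intro sum_mono) (simp add: assms)
  finally show ?thesis by simp
qed

lemma cantor_cube_grid:
  fixes x :: "real^'n::finite" and k :: nat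
  assumes "x \<in> cantor_cube"
  defines "T \<equiv> 36^k"
  shows "\<exists>Y\<subseteq>cantor_cube. card Y = 2^(5 * T * CARD('n)) \<and>
    (\<forall>y\<in>Y. dist y x \<le> real CARD('n) * (1/2)^T) \<and>
    (\<forall>y\<in>Y. \<forall>y'\<in>Y. y \<noteq> y' \<longrightarrow> (1/2)^(6 * T) \<le> dist y y')"
proof -
  define h :: real where "h = (1/2)^(6 * T)"
  define R :: nat where "R = 2^(5 * T)"
  have "6 * T = 5 * T + T" by simp
  then have "real R * h = (2 * (1/2))^(5 * T) * (1/2::real)^T"
    unfolding R_def h_def by (simp only: power_add power_mult_distrib of_nat_power of_nat_numeral mult.assoc)
  then have h: "h > 0" "real R * h = (1/2)^T" by (simp_all add: h_def)
  have "\<forall>j. \<exists>p\<in>cantor_pts T. p \<le> x $ j \<and> x $ j \<le> p + (1/2)^T"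
    using assms(1) sparse_cantor_approx unfolding cantor_cube_def by blast
  then obtain p where p: "\<And>j. p j \<in> cantor_pts T \<and> p j \<le> x $ j \<and> x $ j \<le> p j + (1/2)^T"
    by metis
  define I where "I = PiE UNIV (\<lambda>_::'n. {..<R})"
  define grid where "grid \<iota> = (\<chi> j. p j + real (\<iota> j) * h)" for \<iota>
  have \<iota>R: "\<iota> j < R" if "\<iota> \<in> I" for \<iota> j using that by (auto simp: I_def PiE_iff)
  have sep: "h \<le> dist (grid \<iota>) (grid \<iota>')" if "\<iota> \<noteq> \<iota>'" for \<iota> \<iota>'
    unfolding grid_def using h(1) that by (rule dist_grid_points)
  have "inj_on grid I"
  proof (rule inj_onI)
    fix \<iota> \<iota>' assume "grid \<iota> = grid \<iota>'"
    then show "\<iota> = \<iota>'" using sep[of \<iota> \<iota>'] h(1) by fastforce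
  qed
  moreover have "card I = R ^ CARD('n)" by (simp add: I_def card_PiE)
  moreover have "R ^ CARD('n) = 2^(5 * T * CARD('n))" by (simp add: R_def power_mult)
  moreover have "grid \<iota> \<in> cantor_cube" if "\<iota> \<in> I" for \<iota>
  proof -
    have "p j + real (\<iota> j) * h \<in> sparse_cantor" for j
      using sparse_cantor_block[of "p j" k "\<iota> j"] p[of j] \<iota>R[OF that, of j]
      unfolding h_def R_def T_def by blast
    then show ?thesis unfolding cantor_cube_def grid_def by simp
  qed
  moreover have "dist (grid \<iota>) x \<le> real CARD('n) * (1/2)^T" if "\<iota> \<in> I" for \<iota>
  proof (rule dist_le_componentwise)
    fix j
    have "real (\<iota> j) * h \<le> real R * h" using \<iota>R[OF that, of j] h(1) by simp
    moreover have "0 \<le> real (\<iota> j) * h" using h(1) by simp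
    ultimately show "\<bar>grid \<iota> $ j - x $ j\<bar> \<le> (1/2)^T" using p[of j] h(2) by (simp add: grid_def abs_le_iff)
  qed
  moreover have "\<forall>y\<in>grid ` I. \<forall>y'\<in>grid ` I. y \<noteq> y' \<longrightarrow> h \<le> dist y y'"
  proof (intro ballI impI)
    fix y y' assume "y \<in> grid ` I" "y' \<in> grid ` I" "y \<noteq> y'"
    then obtain \<iota> \<iota>' where "y = grid \<iota>" "y' = grid \<iota>'" "\<iota> \<noteq> \<iota>'" by blast
    then show "h \<le> dist y y'" using sep by simp
  qed
  ultimately show ?thesis unfolding h_def
    by (intro exI[of _ "grid ` I"]) (auto simp: card_image)
qed

lemma cantor_lines_grid:
  fixes x :: "(real^'m::finite) \<times> (real^'m)" and k :: nat
  assumes "x \<in> cantor_cube \<times> cantor_cube"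
  defines "T \<equiv> 36^k"
  shows "\<exists>Y\<subseteq>cantor_cube \<times> cantor_cube. card Y = 2^(10 * T * CARD('m)) \<and>
    (\<forall>y\<in>Y. dist y x \<le> 2 * real CARD('m) * (1/2)^T) \<and>
    (\<forall>y\<in>Y. \<forall>y'\<in>Y. y \<noteq> y' \<longrightarrow> (1/2)^(6 * T) \<le> dist y y')"
proof -
  let ?n = "CARD('m)" and ?h = "(1/2::real)^(6 * T)"
  obtain Y1 where Y1: "Y1 \<subseteq> cantor_cube" "card Y1 = 2^(5 * T * ?n)"
    "\<forall>y\<in>Y1. dist y (fst x) \<le> real ?n * (1/2)^T" "\<forall>y\<in>Y1. \<forall>y'\<in>Y1. y \<noteq> y' \<longrightarrow> ?h \<le> dist y y'"
    using cantor_cube_grid[of "fst x" k] assms(1) unfolding T_def by auto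
  obtain Y2 where Y2: "Y2 \<subseteq> cantor_cube" "card Y2 = 2^(5 * T * ?n)"
    "\<forall>y\<in>Y2. dist y (snd x) \<le> real ?n * (1/2)^T" "\<forall>y\<in>Y2. \<forall>y'\<in>Y2. y \<noteq> y' \<longrightarrow> ?h \<le> dist y y'"
    using cantor_cube_grid[of "snd x" k] assms(1) unfolding T_def by auto
  have "card (Y1 \<times> Y2) = 2^(10 * T * ?n)"
    using Y1(2) Y2(2) by (simp add: card_cartesian_product flip: power_add)
  moreover have "dist y x \<le> 2 * real ?n * (1/2)^T" if "y \<in> Y1 \<times> Y2" for y
  proof -
    have "dist y x = norm (fst y - fst x, snd y - snd x)" by (cases y, cases x) (simp add: dist_norm)
    also have "\<dots> \<le> dist (fst y) (fst x) + dist (snd y) (snd x)"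
      unfolding dist_norm by (rule norm_Pair_le)
    also have "\<dots> \<le> 2 * real ?n * (1/2)^T" using that Y1(3) Y2(3) by fastforce
    finally show ?thesis .
  qed
  moreover have "?h \<le> dist y y'" if "y \<in> Y1 \<times> Y2" "y' \<in> Y1 \<times> Y2" "y \<noteq> y'" for y y'
  proof (cases "fst y = fst y'")
    case True
    then have "snd y \<noteq> snd y'" using that(3) by (simp add: prod_eq_iff)
    then have "?h \<le> dist (snd y) (snd y')" using that(1,2) Y2(4) by auto
    then show ?thesis using dist_snd_le[of y y'] by linarith
  next
    case False
    then have "?h \<le> dist (fst y) (fst y')" using that(1,2) Y1(4) by auto
    then show ?thesis using dist_fst_le[of y y'] by linarith
  qed
  ultimately show ?thesis using Y1(1) Y2(1) by (intro exI[of _ "Y1 \<times> Y2"]) auto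
qed

lemma half_power_eq_powr: "(1/2::real)^k = 2 powr (- real k)"
proof -
  have "(2::real) powr (- real k) = inverse (2 powr real k)" by (rule powr_minus)
  also have "(2::real) powr real k = 2^k" by (rule powr_realpow) simp
  also have "inverse ((2::real)^k) = (1/2)^k" by (simp add: power_one_over inverse_eq_divide)
  finally show ?thesis by simp
qed

lemma grid_count_bound:
  assumes "n \<ge> 1" "N + n + 1 \<le> T"
  shows "real N \<le> 2 powr real (10 * T * n) * (2 powr (- real (6 * T + 1))) powr (real n + 1/2)"
proof -
  have exponent: "real (10 * T * n) + - real (6 * T + 1) * (real n + 1/2)
      = (4 * real n - 3) * real T - real n - 1/2"
    by (simp add: algebra_simps)
  have "2 powr real (10 * T * n) * (2 powr (- real (6 * T + 1))) powr (real n + 1/2)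
      = 2 powr (real (10 * T * n) + - real (6 * T + 1) * (real n + 1/2))"
    by (simp only: powr_powr powr_add[symmetric])
  also have "\<dots> = 2 powr ((4 * real n - 3) * real T - real n - 1/2)" by (simp only: exponent)
  also have "\<dots> \<ge> 2 powr real N"
  proof (rule powr_mono)
    have "real T \<le> (4 * real n - 3) * real T"
      using assms(1) mult_right_mono[of 1 "4 * real n - 3" "real T"] by simp
    then show "real N \<le> (4 * real n - 3) * real T - real n - 1/2" using assms(2) by linarith
  qed simp
  moreover have "real N \<le> 2 powr real N"
  proof -
    have "real N < real (2^N)" using less_exp[of N] by (simp only: of_nat_less_iff)
    also have "real (2^N) = 2 powr real N" by (simp add: powr_realpow)
    finally show ?thesis by simp
  qed
  ultimately show ?thesis by linarith
qed

text \<open>Near each of its points, \<open>cantor_cube \<times> cantor_cube\<close> contains \<open>2^(10 n T)\<close> points that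
  are \<open>2^(-6 T)\<close>-separated, where \<open>n = CARD('m)\<close> and \<open>T = 36^k\<close>; at those scales this beats
  the exponent \<open>n + 1/2\<close>.\<close>

lemma packing_premeasure_dense_in_cantor_lines:
  fixes A :: "((real^'m::finite) \<times> (real^'m)) set"
  assumes x: "x \<in> cantor_cube \<times> cantor_cube" and \<rho>: "\<rho> > 0"
    and dense: "(cantor_cube \<times> cantor_cube) \<inter> ball x \<rho> \<subseteq> closure A"
  shows "packing_premeasure line_dist (real CARD('m) + 1/2) A = \<infinity>"
proof (rule packing_premeasure_eq_infinity[OF line_dist_triangle])
  fix \<delta> :: real and N :: nat assume "\<delta> > 0"
  let ?n = "CARD('m)"
  have n: "?n \<ge> 1" by (simp add: Suc_leI)
  obtain m where m: "(1/2::real)^m < \<rho> / (2 * real ?n)" "(1/2::real)^m < \<delta>"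
    using real_arch_pow_inv[of "min (\<rho> / (2 * real ?n)) \<delta>" "1/2"] \<rho> \<open>\<delta> > 0\<close> by auto
  define k where "k = max m (N + ?n + 1)"
  define T :: nat where "T = 36^k"
  define h :: real where "h = (1/2)^(6 * T)"
  have "k < 2^k" by (rule less_exp)
  moreover have "(2::nat)^k \<le> 36^k" by (intro power_mono) auto
  ultimately have "k \<le> T" unfolding T_def by linarith
  then have "m \<le> T" "m \<le> 6 * T" "N + ?n + 1 \<le> T" unfolding k_def by auto
  then have small: "(1/2::real)^T \<le> (1/2)^m" "h \<le> (1/2)^m"
    unfolding h_def by (simp_all add: power_decreasing)
  obtain Y where Y: "Y \<subseteq> cantor_cube \<times> cantor_cube" "card Y = 2^(10 * T * ?n)"
    "\<forall>y\<in>Y. dist y x \<le> 2 * real ?n * (1/2)^T" "\<forall>y\<in>Y. \<forall>y'\<in>Y. y \<noteq> y' \<longrightarrow> h \<le> dist y y'"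
    using cantor_lines_grid[OF x, of k, folded T_def] unfolding h_def by blast
  have "Y \<subseteq> closure A"
  proof
    fix y assume "y \<in> Y"
    have "2 * real ?n * (1/2)^T \<le> 2 * real ?n * (1/2)^m" using small(1) by simp
    also have "\<dots> < \<rho>" using m(1) n by (simp add: field_simps)
    finally have "2 * real ?n * (1/2)^T < \<rho>" .
    moreover have "dist y x \<le> 2 * real ?n * (1/2)^T" using Y(3) \<open>y \<in> Y\<close> by blast
    ultimately have "dist x y < \<rho>" by (simp add: dist_commute)
    then show "y \<in> closure A" using dense Y(1) \<open>y \<in> Y\<close> by auto
  qed
  moreover have "finite Y" using Y(2) by (intro card_ge_0_finite) simp
  moreover have "h > 0" by (simp add: h_def)
  ultimately obtain Z where Z: "Z \<subseteq> A" "finite Z" "card Z = card Y"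
    "\<forall>z\<in>Z. \<forall>z'\<in>Z. z \<noteq> z' \<longrightarrow> h / 2 < dist z z'"
    using separated_approx[of Y A h] Y(4) by blast
  show "\<exists>r Z. 0 < r \<and> r \<le> \<delta> \<and> finite Z \<and> Z \<subseteq> A \<and>
      (\<forall>x\<in>Z. \<forall>y\<in>Z. x \<noteq> y \<longrightarrow> 2 * r < line_dist x y) \<and>
      real N \<le> real (card Z) * (2 * r) powr (real ?n + 1/2)"
  proof (intro exI[of _ "h / 4"] exI[of _ Z] conjI)
    show "0 < h / 4" "h / 4 \<le> \<delta>" using \<open>h > 0\<close> small(2) m(2) by linarith+
    show "\<forall>z\<in>Z. \<forall>z'\<in>Z. z \<noteq> z' \<longrightarrow> 2 * (h / 4) < line_dist z z'"
    proof (intro ballI impI)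
      fix z z' assume "z \<in> Z" "z' \<in> Z" "z \<noteq> z'"
      then have "h / 2 < dist z z'" using Z(4) by blast
      then show "2 * (h / 4) < line_dist z z'" using dist_le_line_dist[of z z'] by linarith
    qed
    have "real (card Z) = 2 ^ (10 * T * ?n)" using Z(3) Y(2) by simp
    also have "\<dots> = 2 powr real (10 * T * ?n)" by (rule powr_realpow[symmetric]) simp
    finally have "real (card Z) = 2 powr real (10 * T * ?n)" .
    moreover have "2 * (h / 4) = (1/2)^(6 * T + 1)" by (simp add: h_def)
    then have "2 * (h / 4) = 2 powr (- real (6 * T + 1))" by (simp only: half_power_eq_powr)
    ultimately show "real N \<le> real (card Z) * (2 * (h / 4)) powr (real ?n + 1/2)"
      using grid_count_bound[OF n \<open>N + ?n + 1 \<le> T\<close>] by simp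
  qed (use Z in auto)
qed

lemma non_sticky_if_cantor_lines:
  fixes K :: "((real^'m::finite) \<times> real) set"
  assumes "cantor_cube \<times> cantor_cube \<subseteq> line_set K"
  shows "non_sticky K"
proof -
  have "packing_measure line_dist (real CARD('m) + 1/2) (line_set K) = \<infinity>"
    using packing_premeasure_dense_in_cantor_lines assms zero_in_cantor_cube
    by (intro packing_measure_eq_infinity[of "cantor_cube \<times> cantor_cube"] compact_imp_closed
        compact_Times compact_cantor_cube) auto
  then have "ereal (real CARD('m) + 1/2) \<le> packing_dim line_dist (line_set K)"
    unfolding packing_dim_def by (intro Sup_upper) auto
  then show ?thesis unfolding non_sticky_def by (simp add: less_le_trans[rotated])
qed

theorem exists_null_non_sticky_kakeya:
  "\<exists>K :: ((real^'m::finite) \<times> real) set. kakeya_set K \<and> non_sticky K \<and> emeasure lborel K = 0"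
proof -
  obtain a where a: "\<forall>v\<in>{-1..1}. \<bar>a v\<bar> \<le> 1" "\<And>e. e > 0 \<Longrightarrow> rect_cover (closure (fan a)) e"
    using besicovitch_planar by blast
  define B where "B = closure (fan a) \<union> prod.swap ` closure (fan a)"
  define K :: "((real^'m) \<times> real) set" where "K = lift_plane B 1 undefined \<union> cantor_segments"
  have "compact B" unfolding B_def using compact_closure_fan[OF a(1)]
    by (intro compact_Un compact_continuous_image continuous_on_swap)
  then have "compact K" unfolding K_def by (intro compact_Un compact_lift_plane compact_cantor_segments)
  moreover have "\<exists>x. closed_segment x (x + u) \<subseteq> K" if "norm u = 1" for u
    using lift_plane_unit_segment[OF that fan_swap_segment, of a undefined] unfolding K_def B_def by blast
  ultimately have "kakeya_set K" unfolding kakeya_set_def by blast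
  moreover have "non_sticky K"
    using cantor_cube_lines line_set_mono[of cantor_segments K]
    by (intro non_sticky_if_cantor_lines) (auto simp: K_def)
  moreover have "emeasure lborel K = 0"
  proof (rule null_lift_plane)
    show "K \<subseteq> lift_plane (B \<union> sweep sparse_cantor) 2 undefined"
      unfolding K_def using lift_plane_mono[of B "B \<union> sweep sparse_cantor" 1 2]
        lift_plane_mono[of "sweep sparse_cantor" "B \<union> sweep sparse_cantor" 2 2] cantor_segments_subset
      by fastforce
    show "rect_cover (B \<union> sweep sparse_cantor) e" if "e > 0" for e
    proof -
      have "rect_cover (B \<union> sweep sparse_cantor) (e/3 + e/3 + e/3)"
        unfolding B_def using that a(2) rect_cover_swap rect_cover_sweep_sparse_cantor
        by (intro rect_cover_Un) auto
      then show ?thesis by simp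
    qed
  qed simp
  ultimately show ?thesis by blast
qed

theorem theorem1p2:
  shows "(\<exists>K :: ((real^1) \<times> real) set.
            kakeya_set K \<and> non_sticky K \<and> emeasure lborel K = 0) \<and>
         (CARD('m::finite) \<ge> 2 \<longrightarrow>
            (\<exists>K :: ((real^'m) \<times> real) set.
               kakeya_set K \<and> non_sticky K \<and> emeasure lborel K = 0))"
  by (intro conjI impI exists_null_non_sticky_kakeya)

end
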